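(* Let $\Sigma$ be an alphabet and $L\subseteq\Sigma^\omega$. The following are equivalent: (1) there are finitely many Parikh-recognizable languages $U_1,V_1,\dots,U_n,V_n\subseteq\Sigma^*$ with $L=\bigcup_{i=1}^n U_iV_i^\omega$; (2) $L$ is recognized by an SPBA $\mathcal{A}$ such that accepting states appear only in the leaves of the condensation of $\mathcal{A}$, and there is at most one accepting state per leaf.
   Context: An alphabet $\Sigma$ is a finite nonempty set; $\varepsilon$ is the empty word. For $L\subseteq\Sigma^*$, $L^\omega=\{w_1w_2\cdots\mid w_i\in L\setminus\{\varepsilon\}\}$. A semi-linear set in $\mathbb{N}^d$ is a finite union of sets $\{b_0+b_1z_1+\dots+b_\ell z_\ell\mid z_i\in\mathbb{N}\}$ with $b_j\in\mathbb{N}^d$. A Parikh automaton (PA) of dimension $d$ is $\mathcal{A}=(Q,\Sigma,q_0,\Delta,F,C)$ with finite state set $Q$, $q_0\in Q$, $F\subseteq Q$, finite $\Delta\subseteq Q\times\Sigma\times\mathbb{N}^d\times Q$, and semi-linear $C\subseteq\mathbb{N}^d$. A run on $w=x_1\cdots x_n$ is $r_1\cdots r_n$ with $r_i=(p_{i-1},x_i,\mathbf{v}_i,p_i)\in\Delta$, $p_0=q_0$; $\rho(r)=\sum_i\mathbf{v}_i$; it is accepting if $p_n\in F$ and $\rho(r)\in C$. A language is Parikh-recognizable if it is the set of words with an accepting run of some PA. A run on an infinite word $\alpha$ is an infinite sequence $r=r_1r_2\cdots$ with $r_i=(p_{i-1},\alpha_i,\mathbf{v}_i,p_i)\in\Delta$,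 $p_0=q_0$. A (strong reset) Parikh–Büchi automaton (SPBA) is a PA where such a run is accepting if, setting $k_0=0$ and letting $k_1<k_2<\cdots$ be all positions with $p_{k_i}\in F$, this sequence is infinite and $\rho(r_{k_{i-1}+1}\cdots r_{k_i})\in C$ for all $i\ge1$; it recognizes the set of infinite words with an accepting run. The underlying graph of $\mathcal{A}$ has vertex set $Q$ and an edge $(p,q)$ iff some transition goes from $p$ to $q$. A strongly connected component (SCC) is a maximal set of vertices mutually reachable by paths. The condensation is the DAG whose vertices are the SCCs, with an edge $(U,V)$ iff there are $u\in U$, $v\in V$ with an edge $(u,v)$; its leaves are SCCs without outgoing edges in the condensation. *)

theory Defs
  imports Main "HOL-Library.Omega_Words_Fun"
begin

definition vadd :: "nat list \<Rightarrow> nat list \<Rightarrow> nat list" where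
  "vadd u v = map2 (+) u v"

definition vscale :: "nat \<Rightarrow> nat list \<Rightarrow> nat list" where
  "vscale z v = map ((*) z) v"

definition linear_set :: "nat list \<Rightarrow> nat list list \<Rightarrow> nat list set" where
  "linear_set b0 bs =
     {foldr vadd (map2 vscale zs bs) b0 | zs. length zs = length bs}"

definition semilinear :: "nat \<Rightarrow> nat list set \<Rightarrow> bool" where
  "semilinear d C \<longleftrightarrow>
     (\<exists>ps :: (nat list \<times> nat list list) list.
        (\<forall>(b0, bs) \<in> set ps. length b0 = d \<and> (\<forall>b \<in> set bs. length b = d)) \<and>
        C = (\<Union>(b0, bs) \<in> set ps. linear_set b0 bs))"

type_synonym 'a ptrans = "nat \<times> 'a \<times> nat list \<times> nat"

record 'a pa =
  pa_dim    :: nat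
  pa_states :: "nat set"
  pa_init   :: nat
  pa_trans  :: "'a ptrans set"
  pa_final  :: "nat set"
  pa_constr :: "nat list set"

definition tsrc :: "'a ptrans \<Rightarrow> nat" where "tsrc t = fst t"
definition tlbl :: "'a ptrans \<Rightarrow> 'a" where "tlbl t = fst (snd t)"
definition tvec :: "'a ptrans \<Rightarrow> nat list" where "tvec t = fst (snd (snd t))"
definition ttgt :: "'a ptrans \<Rightarrow> nat" where "ttgt t = snd (snd (snd t))"

definition wf_pa :: "'a pa \<Rightarrow> bool" where
  "wf_pa A \<longleftrightarrow>
     finite (pa_states A) \<and> pa_init A \<in> pa_states A \<and>
     pa_final A \<subseteq> pa_states A \<and> finite (pa_trans A) \<and>
     (\<forall>(p, a, v, q) \<in> pa_trans A.
        p \<in> pa_states A \<and> q \<in> pa_states A \<and> length v = pa_dim A) \<and>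
     semilinear (pa_dim A) (pa_constr A)"

definition rho :: "nat \<Rightarrow> 'a ptrans list \<Rightarrow> nat list" where
  "rho d rs = foldr vadd (map tvec rs) (replicate d 0)"

definition is_run :: "'a pa \<Rightarrow> 'a list \<Rightarrow> 'a ptrans list \<Rightarrow> bool" where
  "is_run A w rs \<longleftrightarrow>
     length rs = length w \<and>
     (\<forall>i < length rs. rs ! i \<in> pa_trans A \<and> tlbl (rs ! i) = w ! i \<and>
        tsrc (rs ! i) = (if i = 0 then pa_init A else ttgt (rs ! (i - 1))))"

definition run_last :: "'a pa \<Rightarrow> 'a ptrans list \<Rightarrow> nat" where
  "run_last A rs = (if rs = [] then pa_init A else ttgt (last rs))"

definition pa_lang :: "'a pa \<Rightarrow> 'a list set" where
  "pa_lang A = {w. \<exists>rs. is_run A w rs \<and> run_last A rs \<in> pa_final A \<and>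
                        rho (pa_dim A) rs \<in> pa_constr A}"

definition parikh_recognizable :: "'a list set \<Rightarrow> bool" where
  "parikh_recognizable L \<longleftrightarrow> (\<exists>A :: 'a pa. wf_pa A \<and> pa_lang A = L)"

text \<open>A run r on an infinite word: r i is the (i+1)-st transition r_{i+1} of the paper.\<close>
definition is_orun :: "'a pa \<Rightarrow> 'a word \<Rightarrow> (nat \<Rightarrow> 'a ptrans) \<Rightarrow> bool" where
  "is_orun A \<alpha> r \<longleftrightarrow>
     (\<forall>i. r i \<in> pa_trans A \<and> tlbl (r i) = \<alpha> i \<and>
          tsrc (r i) = (if i = 0 then pa_init A else ttgt (r (i - 1))))"

definition ostate :: "'a pa \<Rightarrow> (nat \<Rightarrow> 'a ptrans) \<Rightarrow> nat \<Rightarrow> nat" where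
  "ostate A r k = (if k = 0 then pa_init A else ttgt (r (k - 1)))"

text \<open>Acceptance: infinitely many positions k \<ge> 1 with p_k in F, and for every two
  consecutive positions k_{i-1} < k_i of the sequence 0 = k_0 < k_1 < ... the
  vector sum of r_{k_{i-1}+1} ... r_{k_i} lies in C.\<close>
definition spba_accepting :: "'a pa \<Rightarrow> (nat \<Rightarrow> 'a ptrans) \<Rightarrow> bool" where
  "spba_accepting A r \<longleftrightarrow>
     (\<exists>\<^sub>\<infinity>k. k \<ge> 1 \<and> ostate A r k \<in> pa_final A) \<and>
     (\<forall>i j. i < j \<and> (i = 0 \<or> ostate A r i \<in> pa_final A) \<and> ostate A r j \<in> pa_final A \<and>
            (\<forall>k. i < k \<and> k < j \<longrightarrow> ostate A r k \<notin> pa_final A) \<longrightarrow>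
            rho (pa_dim A) (map r [i..<j]) \<in> pa_constr A)"

definition spba_lang :: "'a pa \<Rightarrow> 'a word set" where
  "spba_lang A = {\<alpha>. \<exists>r. is_orun A \<alpha> r \<and> spba_accepting A r}"

definition pa_edges :: "'a pa \<Rightarrow> (nat \<times> nat) set" where
  "pa_edges A = {(p, q). \<exists>a v. (p, a, v, q) \<in> pa_trans A}"

definition scc_of :: "'a pa \<Rightarrow> nat \<Rightarrow> nat set" where
  "scc_of A q = {p \<in> pa_states A. (q, p) \<in> (pa_edges A)\<^sup>* \<and> (p, q) \<in> (pa_edges A)\<^sup>*}"

definition sccs :: "'a pa \<Rightarrow> nat set set" where
  "sccs A = scc_of A ` pa_states A"

definition is_leaf_scc :: "'a pa \<Rightarrow> nat set \<Rightarrow> bool" where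
  "is_leaf_scc A S \<longleftrightarrow> S \<in> sccs A \<and>
     \<not> (\<exists>u \<in> S. \<exists>v. (u, v) \<in> pa_edges A \<and> v \<notin> S)"

definition final_only_in_leaves :: "'a pa \<Rightarrow> bool" where
  "final_only_in_leaves A \<longleftrightarrow>
     (\<forall>q \<in> pa_final A. \<exists>S. is_leaf_scc A S \<and> q \<in> S) \<and>
     (\<forall>S. is_leaf_scc A S \<longrightarrow> card (S \<inter> pa_final A) \<le> 1)"

text \<open>L^omega = { w1 w2 ... | wi \<in> L - {\<epsilon>} }.\<close>
definition omega_pow :: "'a list set \<Rightarrow> 'a word set" where
  "omega_pow V = {\<alpha>. \<exists>ws :: nat \<Rightarrow> 'a list.
       (\<forall>i. ws i \<in> V \<and> ws i \<noteq> []) \<and>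
       (\<forall>k. prefix (length (concat (map ws [0..<k]))) \<alpha> = concat (map ws [0..<k]))}"

definition conc_omega :: "'a list set \<Rightarrow> 'a word set \<Rightarrow> 'a word set" where
  "conc_omega U W = {u \<frown> \<beta> | u \<beta>. u \<in> U \<and> \<beta> \<in> W}"

end

theory Submission
  imports Defs
begin

text \<open>
  A strong reset Parikh-Buechi automaton checks its constraint separately on each segment of a run
  between consecutive visits to final states. Hence it accepts exactly the infinite concatenations
  \<open>w\<^sub>0 w\<^sub>1 \<dots>\<close> with \<open>w\<^sub>n \<in> L(p\<^sub>n, p\<^sub>n\<^sub>+\<^sub>1)\<close>, where \<open>p\<^sub>0\<close> is the initial state, the \<open>p\<^sub>n\<^sub>+\<^sub>1\<close> are
  final, and the segment language \<open>L(p, q)\<close> consists of the words of nonempty runs from \<open>p\<close> to \<open>q\<close>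
  that avoid final states in between and satisfy the constraint; each \<open>L(p, q)\<close> is
  Parikh-recognizable. If the final states lie in leaves of the condensation, at most one per leaf,
  a run never leaves the leaf of its first final state \<open>f\<close>, so all later segments lie in
  \<open>L(f, f)\<close> and the language is the union of the \<open>L(p\<^sub>0, f) L(f, f)\<^sup>\<omega>\<close>.

  Conversely, \<open>U V\<^sup>\<omega>\<close> is recognized by an automaton that simulates the automaton for \<open>U\<close> and then
  repeatedly the one for \<open>V\<close>, returning each time to a single final state whose component is a
  leaf; flags in the vectors make the constraint check both constraints on the first segment and
  only that of \<open>V\<close> afterwards. Finite unions are formed with a fresh initial state, which keeps
  the final states in leaves, one per leaf.
\<close>

section \<open>Vectors and semilinear sets\<close>

abbreviation zeros :: "nat \<Rightarrow> nat list" where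
  "zeros d \<equiv> replicate d 0"

abbreviation lincomb :: "nat list \<Rightarrow> nat list list \<Rightarrow> nat list \<Rightarrow> nat list" where
  "lincomb b0 bs zs \<equiv> foldr vadd (map2 vscale zs bs) b0"

lemma length_vadd [simp]: "length (vadd u v) = min (length u) (length v)"
  by (simp add: vadd_def)

lemma vadd_Nil [simp]: "vadd [] v = []" "vadd u [] = []"
  by (auto simp: vadd_def)

lemma vadd_Cons [simp]: "vadd (a # u) (b # v) = (a + b) # vadd u v"
  by (simp add: vadd_def)

lemma vadd_append: "length a = length c \<Longrightarrow> vadd (a @ b) (c @ d) = vadd a c @ vadd b d"
  by (simp add: vadd_def)

lemma vadd_blocks:
  "length a = length a' \<Longrightarrow> length b = length b' \<Longrightarrow>
    vadd (a @ b @ c) (a' @ b' @ c') = vadd a a' @ vadd b b' @ vadd c c'"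
  by (simp add: vadd_append)

lemma vadd_zeros_left [simp]: "length v = d \<Longrightarrow> vadd (zeros d) v = v"
  by (induction v arbitrary: d) (auto simp: vadd_def)

lemma vadd_zeros_right [simp]: "length v = d \<Longrightarrow> vadd v (zeros d) = v"
  by (induction v arbitrary: d) (auto simp: vadd_def)

lemma length_vscale [simp]: "length (vscale z v) = length v"
  by (simp add: vscale_def)

lemma vscale_append [simp]: "vscale z (a @ b) = vscale z a @ vscale z b"
  by (simp add: vscale_def)

lemma vscale_zeros [simp]: "vscale z (zeros n) = zeros n"
  by (simp add: vscale_def)

lemma rho_Nil [simp]: "rho d [] = zeros d"
  by (simp add: rho_def)

lemma rho_Cons [simp]: "rho d (t # ts) = vadd (tvec t) (rho d ts)"
  by (simp add: rho_def)

lemma rho_cong: "map tvec rs = map tvec rs' \<Longrightarrow> rho d rs = rho d rs'"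
  by (simp add: rho_def)

lemma length_lincomb:
  assumes "length b0 = d" "\<forall>b\<in>set bs. length b = d"
  shows "length (lincomb b0 bs zs) = d"
  using assms
proof (induction bs arbitrary: zs)
  case (Cons b bs)
  then show ?case by (cases zs) auto
qed simp

lemma semilinear_length: "semilinear d C \<Longrightarrow> x \<in> C \<Longrightarrow> length x = d"
  unfolding semilinear_def linear_set_def using length_lincomb by fastforce

lemma semilinear_empty: "semilinear d {}"
  unfolding semilinear_def by (rule exI[of _ "[]"]) auto

lemma semilinear_singleton: "semilinear (length v) {v}"
  unfolding semilinear_def linear_set_def by (rule exI[of _ "[(v, [])]"]) auto

lemma semilinear_Un:
  assumes "semilinear d C" "semilinear d D"
  shows "semilinear d (C \<union> D)"
proof -
  obtain ps1 ps2 :: "(nat list \<times> nat list list) list" where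
    "\<forall>(b0, bs)\<in>set ps1. length b0 = d \<and> (\<forall>b\<in>set bs. length b = d)"
    "C = (\<Union>(b0, bs)\<in>set ps1. linear_set b0 bs)"
    "\<forall>(b0, bs)\<in>set ps2. length b0 = d \<and> (\<forall>b\<in>set bs. length b = d)"
    "D = (\<Union>(b0, bs)\<in>set ps2. linear_set b0 bs)"
    using assms unfolding semilinear_def by blast
  then show ?thesis
    unfolding semilinear_def by (intro exI[of _ "ps1 @ ps2"]) auto
qed

lemma semilinear_positive_multiples: "semilinear (length v) {vscale k v | k. 1 \<le> k}"
proof -
  have step: "vadd (vscale z v) v = vscale (Suc z) v" for z
    by (induction v) (auto simp: vscale_def)
  have "linear_set v [v] = {vscale k v | k. 1 \<le> k}"
  proof (intro set_eqI iffI)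
    fix x assume "x \<in> linear_set v [v]"
    then obtain z where "x = vadd (vscale z v) v"
      unfolding linear_set_def by (auto simp: length_Suc_conv)
    then show "x \<in> {vscale k v | k. 1 \<le> k}"
      unfolding step by force
  next
    fix x assume "x \<in> {vscale k v | k. 1 \<le> k}"
    then obtain k where "x = vscale k v" "1 \<le> k"
      by blast
    then have "x = vscale (Suc (k - 1)) v"
      by simp
    then show "x \<in> linear_set v [v]"
      unfolding linear_set_def step[symmetric] by (intro CollectI exI[of _ "[k - 1]"]) simp
  qed
  then show ?thesis
    unfolding semilinear_def by (intro exI[of _ "[(v, [v])]"]) auto
qed

definition vprod :: "nat list set \<Rightarrow> nat list set \<Rightarrow> nat list set" where
  "vprod C D = {x @ y | x y. x \<in> C \<and> y \<in> D}"

lemma append_in_vprod_iff: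
  assumes "\<forall>x\<in>C. length x = d" "length p = d"
  shows "p @ q \<in> vprod C D \<longleftrightarrow> p \<in> C \<and> q \<in> D"
  using assms unfolding vprod_def by auto

lemma lincomb_pad_left:
  assumes "length b0 = d" "length c0 = e" "\<forall>c\<in>set cs. length c = e"
  shows "lincomb (b0 @ c0) (map (\<lambda>c. zeros d @ c) cs) zs = b0 @ lincomb c0 cs zs"
  using assms
proof (induction cs arbitrary: zs)
  case (Cons c cs)
  show ?case
  proof (cases zs)
    case (Cons z zs')
    have "length (lincomb c0 cs zs') = e"
      using Cons.prems by (intro length_lincomb) auto
    then show ?thesis
      using Cons.IH[of zs'] Cons.prems \<open>zs = z # zs'\<close> by (simp add: vadd_append)
  qed simp
qed simp

lemma lincomb_pad_right:
  assumes "length x = d" "\<forall>b\<in>set bs. length b = d" "length y = e"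
  shows "lincomb (x @ y) (map (\<lambda>b. b @ zeros e) bs) zs = lincomb x bs zs @ y"
  using assms
proof (induction bs arbitrary: zs)
  case (Cons b bs)
  show ?case
  proof (cases zs)
    case (Cons z zs')
    have "length (lincomb x bs zs') = d"
      using Cons.prems by (intro length_lincomb) auto
    then show ?thesis
      using Cons.IH[of zs'] Cons.prems \<open>zs = z # zs'\<close> by (simp add: vadd_append)
  qed simp
qed simp

lemma linear_set_vprod:
  assumes "length b0 = d" "\<forall>b\<in>set bs. length b = d"
    and "length c0 = e" "\<forall>c\<in>set cs. length c = e"
  shows "vprod (linear_set b0 bs) (linear_set c0 cs) =
    linear_set (b0 @ c0) (map (\<lambda>b. b @ zeros e) bs @ map (\<lambda>c. zeros d @ c) cs)"
    (is "_ = linear_set _ ?bcs")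
proof -
  have split: "lincomb (b0 @ c0) ?bcs (zs1 @ zs2) = lincomb b0 bs zs1 @ lincomb c0 cs zs2"
    if "length zs1 = length bs" for zs1 zs2
  proof -
    have "length (lincomb c0 cs zs2) = e"
      using assms by (intro length_lincomb) auto
    then show ?thesis
      using that assms lincomb_pad_left[of b0 d c0 e cs zs2]
        lincomb_pad_right[of b0 d bs "lincomb c0 cs zs2" e zs1]
      by (simp add: foldr_append)
  qed
  show ?thesis
  proof (intro set_eqI iffI)
    fix v assume "v \<in> vprod (linear_set b0 bs) (linear_set c0 cs)"
    then obtain zs1 zs2 where "length zs1 = length bs" "length zs2 = length cs"
      "v = lincomb b0 bs zs1 @ lincomb c0 cs zs2"
      unfolding vprod_def linear_set_def by blast
    then show "v \<in> linear_set (b0 @ c0) ?bcs"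
      unfolding linear_set_def using split by (intro CollectI exI[of _ "zs1 @ zs2"]) auto
  next
    fix v assume "v \<in> linear_set (b0 @ c0) ?bcs"
    then obtain zs where zs: "length zs = length bs + length cs" "v = lincomb (b0 @ c0) ?bcs zs"
      unfolding linear_set_def by auto
    then have "v = lincomb b0 bs (take (length bs) zs) @ lincomb c0 cs (drop (length bs) zs)"
      using split[of "take (length bs) zs" "drop (length bs) zs"] by simp
    then show "v \<in> vprod (linear_set b0 bs) (linear_set c0 cs)"
      unfolding vprod_def linear_set_def using zs(1) by fastforce
  qed
qed

lemma semilinear_vprod:
  assumes "semilinear d C" "semilinear e D"
  shows "semilinear (d + e) (vprod C D)"
proof -
  obtain ps1 where ps1: "\<forall>(b0, bs)\<in>set ps1. length b0 = d \<and> (\<forall>b\<in>set bs. length b = d)"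
    and C: "C = (\<Union>(b0, bs)\<in>set ps1. linear_set b0 bs)"
    using assms(1) unfolding semilinear_def by blast
  obtain ps2 where ps2: "\<forall>(c0, cs)\<in>set ps2. length c0 = e \<and> (\<forall>c\<in>set cs. length c = e)"
    and D: "D = (\<Union>(c0, cs)\<in>set ps2. linear_set c0 cs)"
    using assms(2) unfolding semilinear_def by blast
  define join where "join = (\<lambda>((b0 :: nat list, bs), (c0, cs)).
    (b0 @ c0, map (\<lambda>b. b @ zeros e) bs @ map (\<lambda>c. zeros d @ c) cs))"
  define ps where "ps = map join (List.product ps1 ps2)"
  have "vprod C D = (\<Union>(P, Q)\<in>set ps1 \<times> set ps2. vprod (case_prod linear_set P) (case_prod linear_set Q))"
    unfolding C D vprod_def by blast
  also have "\<dots> = (\<Union>PQ\<in>set ps1 \<times> set ps2. case_prod linear_set (join PQ))"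
  proof (rule SUP_cong[OF refl])
    fix PQ assume "PQ \<in> set ps1 \<times> set ps2"
    then obtain b0 bs c0 cs where "PQ = ((b0, bs), (c0, cs))" "(b0, bs) \<in> set ps1" "(c0, cs) \<in> set ps2"
      by (metis mem_Sigma_iff prod.collapse)
    then show "(case PQ of (P, Q) \<Rightarrow> vprod (case_prod linear_set P) (case_prod linear_set Q))
        = case_prod linear_set (join PQ)"
      using ps1 ps2 linear_set_vprod[of b0 d bs c0 e cs] unfolding join_def by fastforce
  qed
  also have "\<dots> = (\<Union>(b0, bs)\<in>set ps. linear_set b0 bs)"
    unfolding ps_def by auto
  finally have "vprod C D = (\<Union>(b0, bs)\<in>set ps. linear_set b0 bs)" .
  moreover have "\<forall>(b0, bs)\<in>set ps. length b0 = d + e \<and> (\<forall>b\<in>set bs. length b = d + e)"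
    using ps1 ps2 unfolding ps_def join_def by fastforce
  ultimately show ?thesis
    unfolding semilinear_def by blast
qed

section \<open>Finite paths\<close>

lemma ptrans_sel [simp]:
  "tsrc (p, a, v, q) = p" "tlbl (p, a, v, q) = a" "tvec (p, a, v, q) = v" "ttgt (p, a, v, q) = q"
  by (simp_all add: tsrc_def tlbl_def tvec_def ttgt_def)

lemma ptrans_eq: "t = (tsrc t, tlbl t, tvec t, ttgt t)"
  by (cases t) simp

lemma trans_in_edges: "t \<in> pa_trans A \<Longrightarrow> (tsrc t, ttgt t) \<in> pa_edges A"
  unfolding pa_edges_def by (cases t) auto

lemma edgesE:
  assumes "(p, q) \<in> pa_edges A"
  obtains t where "t \<in> pa_trans A" "tsrc t = p" "ttgt t = q"
  using assms unfolding pa_edges_def by (auto intro: that[of "(p, _, _, q)"])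

lemma wf_pa_trans:
  assumes "wf_pa A" "t \<in> pa_trans A"
  shows "tsrc t \<in> pa_states A" "ttgt t \<in> pa_states A" "length (tvec t) = pa_dim A"
  using assms unfolding wf_pa_def by (cases t, fastforce)+

fun connects :: "nat \<Rightarrow> 'a ptrans list \<Rightarrow> nat \<Rightarrow> bool" where
  "connects p [] q \<longleftrightarrow> p = q"
| "connects p (t # ts) q \<longleftrightarrow> tsrc t = p \<and> connects (ttgt t) ts q"

definition path :: "'a pa \<Rightarrow> nat \<Rightarrow> 'a ptrans list \<Rightarrow> nat \<Rightarrow> bool" where
  "path A p rs q \<longleftrightarrow> set rs \<subseteq> pa_trans A \<and> connects p rs q"

lemma path_Nil [simp]: "path A p [] q \<longleftrightarrow> p = q"
  by (simp add: path_def)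

lemma path_Cons [simp]:
  "path A p (t # ts) q \<longleftrightarrow> t \<in> pa_trans A \<and> tsrc t = p \<and> path A (ttgt t) ts q"
  by (auto simp: path_def)

lemma path_append: "path A p (xs @ ys) q \<longleftrightarrow> (\<exists>m. path A p xs m \<and> path A m ys q)"
  by (induction xs arbitrary: p) auto

lemma path_target: "path A p rs q \<Longrightarrow> q = (if rs = [] then p else ttgt (last rs))"
  by (induction rs arbitrary: p) auto

lemma path_nth_src:
  "path A p rs q \<Longrightarrow> i < length rs \<Longrightarrow> tsrc (rs ! i) = (if i = 0 then p else ttgt (rs ! (i - 1)))"
proof (induction rs arbitrary: p i)
  case (Cons t ts)
  then show ?case by (cases i) (auto simp: nth_Cons')
qed simp

lemma connects_nth_src:
  assumes "\<forall>i<length rs. tsrc (rs ! i) = (if i = 0 then p else ttgt (rs ! (i - 1)))"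
  shows "connects p rs (if rs = [] then p else ttgt (last rs))"
  using assms
proof (induction rs arbitrary: p)
  case (Cons t ts)
  have "connects (ttgt t) ts (if ts = [] then ttgt t else ttgt (last ts))"
  proof (rule Cons.IH, intro allI impI)
    fix i assume "i < length ts"
    then show "tsrc (ts ! i) = (if i = 0 then ttgt t else ttgt (ts ! (i - 1)))"
      using Cons.prems[rule_format, of "Suc i"] by (cases i) auto
  qed
  moreover have "tsrc t = p"
    using Cons.prems by force
  ultimately show ?case by auto
qed simp

lemma length_rho_path: "wf_pa A \<Longrightarrow> path A p rs q \<Longrightarrow> length (rho (pa_dim A) rs) = pa_dim A"
  by (induction rs arbitrary: p) (auto simp: wf_pa_trans)

lemma path_rtrancl: "path A p rs q \<Longrightarrow> (p, q) \<in> (pa_edges A)\<^sup>*"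
  by (induction rs arbitrary: p) (auto intro: converse_rtrancl_into_rtrancl trans_in_edges)

lemma path_trancl: "path A p rs q \<Longrightarrow> rs \<noteq> [] \<Longrightarrow> (p, q) \<in> (pa_edges A)\<^sup>+"
proof (induction rs arbitrary: p)
  case (Cons t ts)
  then have "(p, ttgt t) \<in> pa_edges A" using trans_in_edges by fastforce
  then show ?case
    using Cons by (cases "ts = []") (auto intro: trancl_into_trancl2)
qed simp

lemma is_run_iff_path: "is_run A w rs \<longleftrightarrow> path A (pa_init A) rs (run_last A rs) \<and> map tlbl rs = w"
proof
  assume r: "is_run A w rs"
  then have "connects (pa_init A) rs (run_last A rs)"
    unfolding is_run_def run_last_def by (intro connects_nth_src) auto
  moreover have "set rs \<subseteq> pa_trans A"
    using r unfolding is_run_def by (metis in_set_conv_nth subsetI)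
  moreover have "map tlbl rs = w"
    using r unfolding is_run_def by (auto intro: nth_equalityI)
  ultimately show "path A (pa_init A) rs (run_last A rs) \<and> map tlbl rs = w"
    unfolding path_def by auto
next
  assume "path A (pa_init A) rs (run_last A rs) \<and> map tlbl rs = w"
  then show "is_run A w rs"
    unfolding is_run_def using path_nth_src[of A "pa_init A" rs] by (auto simp: path_def)
qed

lemma pa_lang_path:
  "pa_lang A = {map tlbl rs | rs q. path A (pa_init A) rs q \<and> q \<in> pa_final A \<and> rho (pa_dim A) rs \<in> pa_constr A}"
proof -
  have "path A (pa_init A) rs q \<Longrightarrow> q = run_last A rs" for rs q
    unfolding run_last_def using path_target by metis
  then show ?thesis unfolding pa_lang_def is_run_iff_path by blast
qed

definition seg_lang :: "'a pa \<Rightarrow> nat \<Rightarrow> nat \<Rightarrow> 'a list set" where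
  "seg_lang A p q = {map tlbl rs | rs. rs \<noteq> [] \<and> path A p rs q \<and>
     (\<forall>t\<in>set (butlast rs). ttgt t \<notin> pa_final A) \<and> rho (pa_dim A) rs \<in> pa_constr A}"

section \<open>Infinite concatenations\<close>

fun offset :: "(nat \<Rightarrow> 'b list) \<Rightarrow> nat \<Rightarrow> nat" where
  "offset ws 0 = 0"
| "offset ws (Suc n) = offset ws n + length (ws n)"

definition inf_concat :: "(nat \<Rightarrow> 'b list) \<Rightarrow> 'b word \<Rightarrow> bool" where
  "inf_concat ws \<alpha> \<longleftrightarrow> (\<forall>k. prefix (length (concat (map ws [0..<k]))) \<alpha> = concat (map ws [0..<k]))"

lemma omega_pow_iff: "\<beta> \<in> omega_pow V \<longleftrightarrow> (\<exists>ws. (\<forall>i. ws i \<in> V \<and> ws i \<noteq> []) \<and> inf_concat ws \<beta>)"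
  unfolding omega_pow_def inf_concat_def by simp

lemma conc_omega_iff: "\<alpha> \<in> conc_omega X W \<longleftrightarrow> (\<exists>u \<beta>. \<alpha> = u \<frown> \<beta> \<and> u \<in> X \<and> \<beta> \<in> W)"
  unfolding conc_omega_def by blast

lemma length_concat_offset: "length (concat (map ws [0..<k])) = offset ws k"
  by (induction k) auto

lemma offset_map [simp]: "offset (\<lambda>n. map f (ws n)) = offset ws"
proof
  show "offset (\<lambda>n. map f (ws n)) k = offset ws k" for k
    by (induction k) auto
qed

lemma idx_sequence_offset: "\<forall>n. ws n \<noteq> [] \<Longrightarrow> idx_sequence (offset ws)"
  by (simp add: idx_sequence_def)

lemma strict_mono_offset: "\<forall>n. ws n \<noteq> [] \<Longrightarrow> strict_mono (offset ws)"
  by (simp add: strict_mono_Suc_iff)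

lemma offset_interval:
  assumes "\<forall>n. ws n \<noteq> []"
  obtains n j where "i = offset ws n + j" "j < length (ws n)"
proof -
  obtain n where "i \<in> {offset ws n ..< offset ws (Suc n)}"
    using idx_sequence_interval[OF idx_sequence_offset[OF assms]] by blast
  then show thesis using that[of n "i - offset ws n"] by auto
qed

lemma inf_concat_iff_nth:
  "inf_concat ws \<alpha> \<longleftrightarrow> (\<forall>n j. j < length (ws n) \<longrightarrow> \<alpha> (offset ws n + j) = ws n ! j)"
proof
  assume concat: "inf_concat ws \<alpha>"
  show "\<forall>n j. j < length (ws n) \<longrightarrow> \<alpha> (offset ws n + j) = ws n ! j"
  proof (intro allI impI)
    fix n j assume j: "j < length (ws n)"
    have "prefix (offset ws (Suc n)) \<alpha> = concat (map ws [0..<n]) @ ws n"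
      using concat[unfolded inf_concat_def, rule_format, of "Suc n"] by (simp add: length_concat_offset)
    then have "prefix (offset ws (Suc n)) \<alpha> ! (offset ws n + j) = ws n ! j"
      by (simp add: nth_append length_concat_offset)
    then show "\<alpha> (offset ws n + j) = ws n ! j"
      using j by (simp add: subsequence_def)
  qed
next
  assume nth: "\<forall>n j. j < length (ws n) \<longrightarrow> \<alpha> (offset ws n + j) = ws n ! j"
  have "prefix (offset ws k) \<alpha> = concat (map ws [0..<k])" for k
  proof (induction k)
    case (Suc k)
    have "prefix (offset ws (Suc k)) \<alpha> = prefix (offset ws k) \<alpha> @ \<alpha> [offset ws k \<rightarrow> offset ws k + length (ws k)]"
      by (simp add: subsequence_append)
    also have "\<alpha> [offset ws k \<rightarrow> offset ws k + length (ws k)] = ws k"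
      using nth by (intro nth_equalityI) auto
    finally show ?case using Suc by simp
  qed (simp add: subsequence_def)
  then show "inf_concat ws \<alpha>"
    unfolding inf_concat_def length_concat_offset by simp
qed

lemma inf_concat_Suc:
  "inf_concat ws \<alpha> \<longleftrightarrow> (\<exists>\<beta>. \<alpha> = ws 0 \<frown> \<beta> \<and> inf_concat (\<lambda>n. ws (Suc n)) \<beta>)"
proof -
  have offset_Suc: "offset ws (Suc n) = length (ws 0) + offset (\<lambda>n. ws (Suc n)) n" for n
    by (induction n) auto
  show ?thesis
  proof
    assume concat: "inf_concat ws \<alpha>"
    have "prefix (length (ws 0)) \<alpha> = ws 0"
      using concat unfolding inf_concat_iff_nth by (intro nth_equalityI) (auto dest: spec[of _ 0])
    then have "\<alpha> = ws 0 \<frown> suffix (length (ws 0)) \<alpha>"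
      by (metis prefix_suffix)
    moreover have "inf_concat (\<lambda>n. ws (Suc n)) (suffix (length (ws 0)) \<alpha>)"
      unfolding inf_concat_iff_nth
    proof (intro allI impI)
      fix n j assume "j < length (ws (Suc n))"
      then have "\<alpha> (offset ws (Suc n) + j) = ws (Suc n) ! j"
        using concat unfolding inf_concat_iff_nth by blast
      then show "suffix (length (ws 0)) \<alpha> (offset (\<lambda>n. ws (Suc n)) n + j) = ws (Suc n) ! j"
        unfolding offset_Suc by (simp add: add.assoc)
    qed
    ultimately show "\<exists>\<beta>. \<alpha> = ws 0 \<frown> \<beta> \<and> inf_concat (\<lambda>n. ws (Suc n)) \<beta>"
      by blast
  next
    assume "\<exists>\<beta>. \<alpha> = ws 0 \<frown> \<beta> \<and> inf_concat (\<lambda>n. ws (Suc n)) \<beta>"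
    then obtain \<beta> where \<alpha>: "\<alpha> = ws 0 \<frown> \<beta>" and \<beta>: "inf_concat (\<lambda>n. ws (Suc n)) \<beta>"
      by blast
    show "inf_concat ws \<alpha>"
      unfolding inf_concat_iff_nth
    proof (intro allI impI)
      fix n j assume j: "j < length (ws n)"
      show "\<alpha> (offset ws n + j) = ws n ! j"
      proof (cases n)
        case (Suc m)
        then show ?thesis
          using j \<alpha> \<beta>[unfolded inf_concat_iff_nth, rule_format, of j m]
          by (simp only: offset_Suc) (simp add: add.assoc)
      qed (use j \<alpha> in simp)
    qed
  qed
qed

lemma inf_concat_map: "inf_concat ws \<alpha> \<Longrightarrow> inf_concat (\<lambda>n. map f (ws n)) (f \<circ> \<alpha>)"
  unfolding inf_concat_iff_nth by simp

lemma inf_concat_unique: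
  assumes "\<forall>n. ws n \<noteq> []" "inf_concat ws \<alpha>" "inf_concat ws \<beta>"
  shows "\<alpha> = \<beta>"
proof
  fix i
  obtain n j where "i = offset ws n + j" "j < length (ws n)"
    using offset_interval[OF assms(1)] .
  then show "\<alpha> i = \<beta> i"
    using assms(2,3) unfolding inf_concat_iff_nth by simp
qed

lemma inf_concat_exists:
  assumes "\<forall>n. ws n \<noteq> []"
  shows "\<exists>\<alpha>. inf_concat ws \<alpha>"
proof
  show "inf_concat ws (merge (\<lambda>n i. ws n ! (i - offset ws n)) (offset ws))"
    unfolding inf_concat_iff_nth
  proof (intro allI impI)
    fix n j assume "j < length (ws n)"
    then have "offset ws n + j \<in> {offset ws n ..< offset ws (Suc n)}"
      by simp
    then have "merge (\<lambda>n i. ws n ! (i - offset ws n)) (offset ws) (offset ws n + j)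
        = ws n ! (offset ws n + j - offset ws n)"
      by (rule merge[OF idx_sequence_offset[OF assms]])
    then show "merge (\<lambda>n i. ws n ! (i - offset ws n)) (offset ws) (offset ws n + j) = ws n ! j"
      by simp
  qed
qed

lemma inf_concat_segment:
  "inf_concat ws \<alpha> \<Longrightarrow> map \<alpha> [offset ws n..<offset ws (Suc n)] = ws n"
  unfolding inf_concat_iff_nth by (intro nth_equalityI) auto

lemma conc_omega_omega_pow_iff:
  "\<alpha> \<in> conc_omega X (omega_pow Y) \<longleftrightarrow>
    (\<exists>ws. ws 0 \<in> X \<and> (\<forall>n. ws (Suc n) \<in> Y \<and> ws (Suc n) \<noteq> []) \<and> inf_concat ws \<alpha>)"
proof
  assume "\<alpha> \<in> conc_omega X (omega_pow Y)"
  then obtain u \<beta> vs where "\<alpha> = u \<frown> \<beta>" "u \<in> X" "\<forall>i. vs i \<in> Y \<and> vs i \<noteq> []" "inf_concat vs \<beta>"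
    unfolding conc_omega_iff omega_pow_iff by blast
  moreover from this have "inf_concat (case_nat u vs) \<alpha>"
    by (subst inf_concat_Suc) simp
  ultimately show "\<exists>ws. ws 0 \<in> X \<and> (\<forall>n. ws (Suc n) \<in> Y \<and> ws (Suc n) \<noteq> []) \<and> inf_concat ws \<alpha>"
    by (intro exI[of _ "case_nat u vs"]) simp
next
  assume "\<exists>ws. ws 0 \<in> X \<and> (\<forall>n. ws (Suc n) \<in> Y \<and> ws (Suc n) \<noteq> []) \<and> inf_concat ws \<alpha>"
  then obtain ws where ws: "ws 0 \<in> X" "\<forall>n. ws (Suc n) \<in> Y \<and> ws (Suc n) \<noteq> []" "inf_concat ws \<alpha>"
    by blast
  then obtain \<beta> where "\<alpha> = ws 0 \<frown> \<beta>" "inf_concat (\<lambda>n. ws (Suc n)) \<beta>"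
    using inf_concat_Suc by blast
  moreover have "\<beta> \<in> omega_pow Y"
    unfolding omega_pow_iff using ws(2) calculation(2) by (intro exI[of _ "\<lambda>n. ws (Suc n)"]) simp
  ultimately show "\<alpha> \<in> conc_omega X (omega_pow Y)"
    unfolding conc_omega_iff using ws(1) by blast
qed

lemma omega_pow_unfold: "omega_pow Y = conc_omega {v \<in> Y. v \<noteq> []} (omega_pow Y)"
proof (intro set_eqI iffI)
  fix \<beta> assume "\<beta> \<in> omega_pow Y"
  then obtain ws where ws: "\<forall>i. ws i \<in> Y \<and> ws i \<noteq> []" "inf_concat ws \<beta>"
    unfolding omega_pow_iff by blast
  then obtain \<beta>' where "\<beta> = ws 0 \<frown> \<beta>'" "inf_concat (\<lambda>n. ws (Suc n)) \<beta>'"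
    using inf_concat_Suc by blast
  moreover have "\<beta>' \<in> omega_pow Y"
    unfolding omega_pow_iff using ws(1) calculation(2) by (intro exI[of _ "\<lambda>n. ws (Suc n)"]) simp
  ultimately show "\<beta> \<in> conc_omega {v \<in> Y. v \<noteq> []} (omega_pow Y)"
    unfolding conc_omega_iff using ws(1) by blast
next
  fix \<beta> assume "\<beta> \<in> conc_omega {v \<in> Y. v \<noteq> []} (omega_pow Y)"
  then obtain v \<beta>' where v: "\<beta> = v \<frown> \<beta>'" "v \<in> Y" "v \<noteq> []" "\<beta>' \<in> omega_pow Y"
    unfolding conc_omega_iff by blast
  then obtain ws where ws: "\<forall>i. ws i \<in> Y \<and> ws i \<noteq> []" "inf_concat ws \<beta>'"
    unfolding omega_pow_iff by blast
  have "inf_concat (case_nat v ws) \<beta>"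
    using v(1) ws(2) by (subst inf_concat_Suc) simp
  then show "\<beta> \<in> omega_pow Y"
    unfolding omega_pow_iff using v ws(1) by (intro exI[of _ "case_nat v ws"]) (auto split: nat.split)
qed

lemma conc_omega_conc_omega:
  "conc_omega X (conc_omega Y W) = conc_omega {u @ v | u v. u \<in> X \<and> v \<in> Y} W"
proof (intro set_eqI iffI)
  fix \<alpha> assume "\<alpha> \<in> conc_omega X (conc_omega Y W)"
  then obtain u v \<beta> where "\<alpha> = u \<frown> v \<frown> \<beta>" "u \<in> X" "v \<in> Y" "\<beta> \<in> W"
    unfolding conc_omega_iff by blast
  then show "\<alpha> \<in> conc_omega {u @ v | u v. u \<in> X \<and> v \<in> Y} W"
    unfolding conc_omega_iff by (intro exI[of _ "u @ v"] exI[of _ \<beta>]) auto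
next
  fix \<alpha> assume "\<alpha> \<in> conc_omega {u @ v | u v. u \<in> X \<and> v \<in> Y} W"
  then obtain u v \<beta> where "\<alpha> = (u @ v) \<frown> \<beta>" "u \<in> X" "v \<in> Y" "\<beta> \<in> W"
    unfolding conc_omega_iff by blast
  then show "\<alpha> \<in> conc_omega X (conc_omega Y W)"
    unfolding conc_omega_iff by (intro exI[of _ u] exI[of _ "v \<frown> \<beta>"]) auto
qed

lemma conc_omega_omega_pow_absorb:
  "conc_omega {u @ v | u v. u \<in> X \<and> v \<in> Y \<and> v \<noteq> []} (omega_pow Y) = conc_omega X (omega_pow Y)"
proof -
  have "conc_omega X (omega_pow Y) = conc_omega X (conc_omega {v \<in> Y. v \<noteq> []} (omega_pow Y))"
    using omega_pow_unfold[of Y] by (rule arg_cong)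
  also have "\<dots> = conc_omega {u @ v | u v. u \<in> X \<and> v \<in> {v \<in> Y. v \<noteq> []}} (omega_pow Y)"
    by (rule conc_omega_conc_omega)
  also have "{u @ v | u v. u \<in> X \<and> v \<in> {v \<in> Y. v \<noteq> []}} = {u @ v | u v. u \<in> X \<and> v \<in> Y \<and> v \<noteq> []}"
    by blast
  finally show ?thesis ..
qed

section \<open>Acceptance of strong reset Parikh-Buechi automata via segments\<close>

definition seg_factorization :: "'a pa \<Rightarrow> (nat \<Rightarrow> nat) \<Rightarrow> (nat \<Rightarrow> 'a list) \<Rightarrow> 'a word \<Rightarrow> bool" where
  "seg_factorization A fs ws \<alpha> \<longleftrightarrow> fs 0 = pa_init A \<and> (\<forall>n. fs (Suc n) \<in> pa_final A) \<and>
     (\<forall>n. ws n \<in> seg_lang A (fs n) (fs (Suc n))) \<and> inf_concat ws \<alpha>"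

lemma enumerate_gap:
  fixes S :: "nat set"
  assumes "infinite S" "k \<in> S" "k < enumerate S (Suc n)"
  shows "k \<le> enumerate S n"
proof -
  obtain i where "enumerate S i = k"
    using enumerate_Ex[OF assms(1,2)] by blast
  moreover have "i \<le> n"
    using assms \<open>enumerate S i = k\<close> enumerate_mono_iff[OF assms(1), of i "Suc n"] by simp
  then have "\<not> enumerate S n < enumerate S i"
    using assms(1) by simp
  ultimately show ?thesis
    by simp
qed

lemma enumerate_from_0:
  fixes S :: "nat set"
  assumes "infinite S" "0 \<notin> S"
  obtains K where "K 0 = 0" "\<And>n. K n < K (Suc n)" "\<And>n. K (Suc n) \<in> S"
    and "\<And>n k. K n < k \<Longrightarrow> k < K (Suc n) \<Longrightarrow> k \<notin> S"
proof
  let ?K = "case_nat 0 (enumerate S)"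
  show "?K (Suc n) \<in> S" for n
    using enumerate_in_set[OF assms(1)] by simp
  moreover have "0 < enumerate S 0"
    using enumerate_in_set[OF assms(1), of 0] assms(2) by (metis gr0I)
  ultimately show "?K n < ?K (Suc n)" for n
    using enumerate_step[OF assms(1)] by (cases n) auto
  show "k \<notin> S" if "?K n < k" "k < ?K (Suc n)" for n k
  proof
    assume "k \<in> S"
    then show False
      using that Least_le[of "\<lambda>k. k \<in> S" k] enumerate_gap[OF assms(1) \<open>k \<in> S\<close>, of "n - 1"]
      by (cases n) (auto simp: enumerate_0)
  qed
qed simp

lemma path_orun:
  assumes "is_orun A \<alpha> r" "i \<le> j"
  shows "path A (ostate A r i) (map r [i..<j]) (ostate A r j)"
  using assms(2)
proof (induction j)
  case (Suc j)
  show ?case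
  proof (cases "i = Suc j")
    case False
    then have "path A (ostate A r i) (map r [i..<j]) (ostate A r j)"
      using Suc by simp
    moreover have "r j \<in> pa_trans A" "tsrc (r j) = ostate A r j"
      using assms(1) unfolding is_orun_def ostate_def by auto
    ultimately show ?thesis
      using False Suc.prems by (auto simp: path_append ostate_def)
  qed simp
qed simp

lemma seg_lang_of_accepting_run:
  assumes run: "is_orun A \<alpha> r" and acc: "spba_accepting A r" and "i < j"
    and "i = 0 \<or> ostate A r i \<in> pa_final A" "ostate A r j \<in> pa_final A"
    and gap: "\<forall>k. i < k \<and> k < j \<longrightarrow> ostate A r k \<notin> pa_final A"
  shows "map \<alpha> [i..<j] \<in> seg_lang A (ostate A r i) (ostate A r j)"
proof -
  obtain j' where j': "j = Suc j'" "i \<le> j'"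
    using \<open>i < j\<close> by (cases j) auto
  have "path A (ostate A r i) (map r [i..<j]) (ostate A r j)"
    using path_orun[OF run] \<open>i < j\<close> by simp
  moreover have "map tlbl (map r [i..<j]) = map \<alpha> [i..<j]"
    using run by (simp add: is_orun_def)
  moreover have "\<forall>t\<in>set (butlast (map r [i..<j])). ttgt t \<notin> pa_final A"
  proof
    fix t assume "t \<in> set (butlast (map r [i..<j]))"
    then obtain k where "t = r k" "i \<le> k" "k < j'"
      using j' by auto
    then show "ttgt t \<notin> pa_final A"
      using gap j' by (auto simp: ostate_def dest: spec[of _ "Suc k"])
  qed
  moreover have "rho (pa_dim A) (map r [i..<j]) \<in> pa_constr A"
    using acc assms(3-6) unfolding spba_accepting_def by blast
  ultimately show ?thesis
    unfolding seg_lang_def using \<open>i < j\<close> by (intro CollectI exI[of _ "map r [i..<j]"]) simp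
qed

lemma seg_factorization_of_accepting_run:
  assumes run: "is_orun A \<alpha> r" and acc: "spba_accepting A r"
  obtains fs ws where "seg_factorization A fs ws \<alpha>"
proof -
  define S where "S = {k. 1 \<le> k \<and> ostate A r k \<in> pa_final A}"
  have "infinite S" "0 \<notin> S"
    using acc unfolding spba_accepting_def S_def INFM_iff_infinite by simp_all
  then obtain K where K: "K 0 = 0" "\<And>n. K n < K (Suc n)" "\<And>n. K (Suc n) \<in> S"
    "\<And>n k. K n < k \<Longrightarrow> k < K (Suc n) \<Longrightarrow> k \<notin> S"
    by (rule enumerate_from_0) auto
  define fs where "fs n = ostate A r (K n)" for n
  define ws where "ws n = map \<alpha> [K n..<K (Suc n)]" for n
  have "ws n \<in> seg_lang A (fs n) (fs (Suc n))" for n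
    unfolding ws_def fs_def
  proof (rule seg_lang_of_accepting_run[OF run acc K(2)])
    show "K n = 0 \<or> ostate A r (K n) \<in> pa_final A"
      using K(1,3) by (cases n) (auto simp: S_def)
    show "ostate A r (K (Suc n)) \<in> pa_final A"
      using K(3)[of n] by (simp add: S_def)
    show "\<forall>k. K n < k \<and> k < K (Suc n) \<longrightarrow> ostate A r k \<notin> pa_final A"
      using K(4) by (auto simp: S_def)
  qed
  moreover have "offset ws n = K n" for n
  proof (induction n)
    case (Suc n)
    then show ?case using K(2)[of n] by (simp add: ws_def)
  qed (simp add: K(1))
  then have "inf_concat ws \<alpha>"
    unfolding inf_concat_iff_nth by (simp add: ws_def)
  moreover have "fs 0 = pa_init A"
    using K(1) by (simp add: fs_def ostate_def)
  moreover have "fs (Suc n) \<in> pa_final A" for n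
    using K(3)[of n] by (simp add: fs_def S_def)
  ultimately show thesis
    using that unfolding seg_factorization_def by blast
qed

context
  fixes A :: "'a pa" and fs :: "nat \<Rightarrow> nat" and rs :: "nat \<Rightarrow> 'a ptrans list" and r :: "nat \<Rightarrow> 'a ptrans"
  assumes init: "fs 0 = pa_init A"
    and paths: "\<And>n. rs n \<noteq> [] \<and> path A (fs n) (rs n) (fs (Suc n))"
    and r: "inf_concat rs r"
begin

lemma ostate_inf_concat:
  assumes "j < length (rs n)"
  shows "ostate A r (offset rs n + j) = (if j = 0 then fs n else ttgt (rs n ! (j - 1)))"
proof (cases j)
  case (Suc j')
  then show ?thesis
    using assms r unfolding inf_concat_iff_nth by (simp add: ostate_def)
next
  case 0
  show ?thesis
  proof (cases n)
    case (Suc m)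
    have len: "length (rs m) > 0"
      using paths[of m] by simp
    then have "offset rs n - 1 = offset rs m + (length (rs m) - 1)" "offset rs n \<noteq> 0"
      unfolding Suc offset.simps by linarith+
    then have "ostate A r (offset rs n) = ttgt (r (offset rs m + (length (rs m) - 1)))"
      by (simp add: ostate_def del: offset.simps)
    also have "\<dots> = ttgt (rs m ! (length (rs m) - 1))"
      using len r unfolding inf_concat_iff_nth by simp
    also have "\<dots> = fs n"
      using paths[of m] path_target[of A "fs m" "rs m" "fs (Suc m)"] Suc by (simp add: last_conv_nth)
    finally show ?thesis
      using \<open>j = 0\<close> by simp
  qed (use \<open>j = 0\<close> init in \<open>simp add: ostate_def\<close>)
qed

lemma ostate_offset: "ostate A r (offset rs n) = fs n"
  using ostate_inf_concat[of 0 n] paths[of n] by simp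

lemma offset_intervalE:
  obtains n j where "i = offset rs n + j" "j < length (rs n)"
  using offset_interval paths by blast

lemma is_orun_inf_concat: "is_orun A (tlbl \<circ> r) r"
  unfolding is_orun_def
proof
  fix i
  obtain n j where i: "i = offset rs n + j" "j < length (rs n)"
    by (rule offset_intervalE)
  then have ri: "r i = rs n ! j"
    using r unfolding inf_concat_iff_nth by simp
  have "r i \<in> pa_trans A"
    using ri i(2) paths[of n] by (auto simp: path_def)
  moreover have "tsrc (r i) = ostate A r i"
    using ri i path_nth_src[of A "fs n" "rs n" "fs (Suc n)" j] paths[of n] ostate_inf_concat[OF i(2)]
    by simp
  ultimately show "r i \<in> pa_trans A \<and> tlbl (r i) = (tlbl \<circ> r) i \<and>
      tsrc (r i) = (if i = 0 then pa_init A else ttgt (r (i - 1)))"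
    by (simp add: ostate_def)
qed

lemma final_position_iff:
  assumes final: "\<And>n. fs (Suc n) \<in> pa_final A"
    and inner: "\<And>n. \<forall>t\<in>set (butlast (rs n)). ttgt t \<notin> pa_final A"
    and "1 \<le> k"
  shows "ostate A r k \<in> pa_final A \<longleftrightarrow> (\<exists>n. k = offset rs (Suc n))"
proof
  assume k_final: "ostate A r k \<in> pa_final A"
  obtain n j where k: "k = offset rs n + j" "j < length (rs n)"
    by (rule offset_intervalE)
  have "j = 0"
  proof (rule ccontr)
    assume "j \<noteq> 0"
    then have "j - 1 < length (butlast (rs n))"
      using k(2) by simp
    then have "rs n ! (j - 1) \<in> set (butlast (rs n))"
      by (metis nth_mem nth_butlast)
    then show False
      using k_final k ostate_inf_concat[OF k(2)] inner[of n] \<open>j \<noteq> 0\<close> by auto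
  qed
  moreover have "n \<noteq> 0"
    using k \<open>j = 0\<close> \<open>1 \<le> k\<close> by (cases n) auto
  ultimately show "\<exists>n. k = offset rs (Suc n)"
    using k by (cases n) auto
next
  assume "\<exists>n. k = offset rs (Suc n)"
  then obtain n where "k = offset rs (Suc n)" by blast
  then show "ostate A r k \<in> pa_final A"
    using ostate_offset[of "Suc n"] final[of n] by (simp del: offset.simps)
qed

lemma consecutive_final_positions:
  assumes final: "\<And>n. fs (Suc n) \<in> pa_final A"
    and inner: "\<And>n. \<forall>t\<in>set (butlast (rs n)). ttgt t \<notin> pa_final A"
    and ij: "i < j" "i = 0 \<or> ostate A r i \<in> pa_final A" "ostate A r j \<in> pa_final A"
    and gap: "\<forall>k. i < k \<and> k < j \<longrightarrow> ostate A r k \<notin> pa_final A"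
  obtains n where "i = offset rs n" "j = offset rs (Suc n)"
proof -
  have mono: "strict_mono (offset rs)"
    using paths by (simp add: strict_mono_offset)
  obtain n where n: "i = offset rs n"
  proof (cases "i = 0")
    case True
    then show thesis using that[of 0] by simp
  next
    case False
    then have "\<exists>n. i = offset rs (Suc n)"
      using final_position_iff[OF final inner] ij(2) by simp
    then show thesis using that by blast
  qed
  have "1 \<le> j"
    using ij(1) by simp
  then obtain m where m: "j = offset rs (Suc m)"
    using final_position_iff[OF final inner] ij(3) by blast
  have "\<not> m < n"
  proof
    assume "m < n"
    then have "offset rs (Suc m) \<le> offset rs n"
      using strict_mono_less_eq[OF mono] by (simp del: offset.simps)
    then show False
      using ij(1) n m by (simp del: offset.simps)
  qed
  moreover have "\<not> n < m"
  proof
    assume "n < m"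
    then have "i < offset rs (Suc n)" "offset rs (Suc n) < j"
      using n m strict_mono_less[OF mono] by (simp_all del: offset.simps)
    then have "ostate A r (offset rs (Suc n)) \<notin> pa_final A"
      using gap by blast
    then show False
      using ostate_offset[of "Suc n"] final[of n] by simp
  qed
  ultimately show thesis
    using that n m by (metis linorder_neqE_nat)
qed

lemma spba_accepting_inf_concat:
  assumes final: "\<And>n. fs (Suc n) \<in> pa_final A"
    and inner: "\<And>n. \<forall>t\<in>set (butlast (rs n)). ttgt t \<notin> pa_final A"
    and constr: "\<And>n. rho (pa_dim A) (rs n) \<in> pa_constr A"
  shows "spba_accepting A r"
  unfolding spba_accepting_def
proof
  show "\<exists>\<^sub>\<infinity>k. k \<ge> 1 \<and> ostate A r k \<in> pa_final A"
    unfolding INFM_nat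
  proof
    fix m
    have "Suc m \<le> offset rs (Suc m)"
      using paths strict_mono_imp_increasing strict_mono_offset by blast
    then show "\<exists>k>m. 1 \<le> k \<and> ostate A r k \<in> pa_final A"
      using ostate_offset[of "Suc m"] final[of m]
      by (intro exI[of _ "offset rs (Suc m)"]) (simp del: offset.simps)
  qed
  show "\<forall>i j. i < j \<and> (i = 0 \<or> ostate A r i \<in> pa_final A) \<and> ostate A r j \<in> pa_final A \<and>
      (\<forall>k. i < k \<and> k < j \<longrightarrow> ostate A r k \<notin> pa_final A) \<longrightarrow>
      rho (pa_dim A) (map r [i..<j]) \<in> pa_constr A"
  proof (intro allI impI, elim conjE)
    fix i j
    assume "i < j" "i = 0 \<or> ostate A r i \<in> pa_final A" "ostate A r j \<in> pa_final A"
      and "\<forall>k. i < k \<and> k < j \<longrightarrow> ostate A r k \<notin> pa_final A"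
    then obtain n where "i = offset rs n" "j = offset rs (Suc n)"
      using consecutive_final_positions[OF final inner] by blast
    then show "rho (pa_dim A) (map r [i..<j]) \<in> pa_constr A"
      using inf_concat_segment[OF r, of n] constr[of n] by (simp del: offset.simps)
  qed
qed

end

lemma spba_lang_of_seg_factorization:
  assumes "seg_factorization A fs ws \<alpha>"
  shows "\<alpha> \<in> spba_lang A"
proof -
  define run_of where "run_of n rs \<longleftrightarrow> (rs \<noteq> [] \<and> path A (fs n) rs (fs (Suc n))) \<and>
      (\<forall>t\<in>set (butlast rs). ttgt t \<notin> pa_final A) \<and> rho (pa_dim A) rs \<in> pa_constr A \<and> map tlbl rs = ws n"
    for n rs
  have "\<exists>rs. run_of n rs" for n
  proof -
    have "ws n \<in> seg_lang A (fs n) (fs (Suc n))"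
      using assms unfolding seg_factorization_def by blast
    then show ?thesis
      unfolding seg_lang_def run_of_def by auto
  qed
  then obtain rs where "\<And>n. run_of n (rs n)"
    using choice[of run_of] by blast
  then have rs: "\<And>n. rs n \<noteq> [] \<and> path A (fs n) (rs n) (fs (Suc n))"
    "\<And>n. \<forall>t\<in>set (butlast (rs n)). ttgt t \<notin> pa_final A"
    "\<And>n. rho (pa_dim A) (rs n) \<in> pa_constr A" "\<And>n. map tlbl (rs n) = ws n"
    unfolding run_of_def by blast+
  obtain r where r: "inf_concat rs r"
    using inf_concat_exists rs(1) by blast
  have init: "fs 0 = pa_init A" and final: "\<And>n. fs (Suc n) \<in> pa_final A"
    using assms unfolding seg_factorization_def by blast+
  have "tlbl \<circ> r = \<alpha>"
  proof (rule inf_concat_unique)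
    show "\<forall>n. ws n \<noteq> []"
      using rs(1,4) by (metis Nil_is_map_conv)
    show "inf_concat ws (tlbl \<circ> r)"
      using inf_concat_map[OF r, of tlbl] rs(4) by simp
    show "inf_concat ws \<alpha>"
      using assms unfolding seg_factorization_def by blast
  qed
  then have "is_orun A \<alpha> r"
    using is_orun_inf_concat[OF init rs(1) r] by simp
  moreover have "spba_accepting A r"
    using spba_accepting_inf_concat[OF init rs(1) r final rs(2,3)] .
  ultimately show ?thesis
    unfolding spba_lang_def by blast
qed

lemma spba_lang_iff_seg_factorization: "\<alpha> \<in> spba_lang A \<longleftrightarrow> (\<exists>fs ws. seg_factorization A fs ws \<alpha>)"
proof
  assume "\<alpha> \<in> spba_lang A"
  then obtain r where "is_orun A \<alpha> r" "spba_accepting A r"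
    unfolding spba_lang_def by blast
  then obtain fs ws where "seg_factorization A fs ws \<alpha>"
    by (rule seg_factorization_of_accepting_run)
  then show "\<exists>fs ws. seg_factorization A fs ws \<alpha>"
    by blast
qed (use spba_lang_of_seg_factorization in blast)

section \<open>Segment languages are Parikh-recognizable\<close>

definition seg_pa :: "'a pa \<Rightarrow> nat \<Rightarrow> nat \<Rightarrow> 'a pa" where
  "seg_pa A p f = \<lparr>pa_dim = pa_dim A, pa_states = insert 0 (Suc ` pa_states A), pa_init = Suc p,
     pa_trans = {(Suc x, a, v, Suc y) | x a v y. (x, a, v, y) \<in> pa_trans A \<and> y \<notin> pa_final A} \<union>
                {(Suc x, a, v, 0) | x a v. (x, a, v, f) \<in> pa_trans A},
     pa_final = {0}, pa_constr = pa_constr A\<rparr>"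

lemma seg_pa_sel [simp]:
  "pa_dim (seg_pa A p f) = pa_dim A" "pa_init (seg_pa A p f) = Suc p" "pa_final (seg_pa A p f) = {0}"
  "pa_constr (seg_pa A p f) = pa_constr A" "pa_states (seg_pa A p f) = insert 0 (Suc ` pa_states A)"
  by (simp_all add: seg_pa_def)

lemma seg_pa_trans:
  "t \<in> pa_trans (seg_pa A p f) \<longleftrightarrow>
    (\<exists>x a v y. t = (Suc x, a, v, Suc y) \<and> (x, a, v, y) \<in> pa_trans A \<and> y \<notin> pa_final A) \<or>
    (\<exists>x a v. t = (Suc x, a, v, 0) \<and> (x, a, v, f) \<in> pa_trans A)"
  by (simp add: seg_pa_def)

lemma seg_pa_path_of_path:
  assumes "rs \<noteq> []" "path A x rs f" "\<forall>t\<in>set (butlast rs). ttgt t \<notin> pa_final A"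
  shows "\<exists>rs'. path (seg_pa A p f) (Suc x) rs' 0 \<and> map tlbl rs' = map tlbl rs \<and> map tvec rs' = map tvec rs"
  using assms
proof (induction rs arbitrary: x)
  case (Cons t ts)
  show ?case
  proof (cases "ts = []")
    case True
    then have "t = (x, tlbl t, tvec t, f)" "t \<in> pa_trans A"
      using Cons.prems ptrans_eq[of t] by auto
    then have "(Suc x, tlbl t, tvec t, 0) \<in> pa_trans (seg_pa A p f)"
      unfolding seg_pa_trans by metis
    then show ?thesis
      using True by (intro exI[of _ "[(Suc x, tlbl t, tvec t, 0)]"]) simp
  next
    case False
    have t: "t = (x, tlbl t, tvec t, ttgt t)" "t \<in> pa_trans A" "ttgt t \<notin> pa_final A"
      using Cons.prems ptrans_eq[of t] False by auto
    then have "(Suc x, tlbl t, tvec t, Suc (ttgt t)) \<in> pa_trans (seg_pa A p f)"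
      unfolding seg_pa_trans by metis
    moreover obtain rs' where "path (seg_pa A p f) (Suc (ttgt t)) rs' 0"
      "map tlbl rs' = map tlbl ts" "map tvec rs' = map tvec ts"
      using Cons.IH[of "ttgt t"] Cons.prems False by auto
    ultimately show ?thesis
      by (intro exI[of _ "(Suc x, tlbl t, tvec t, Suc (ttgt t)) # rs'"]) simp
  qed
qed simp

lemma path_of_seg_pa_path:
  assumes "path (seg_pa A p f) (Suc x) rs' 0"
  shows "\<exists>rs. rs \<noteq> [] \<and> path A x rs f \<and> (\<forall>t\<in>set (butlast rs). ttgt t \<notin> pa_final A) \<and>
     map tlbl rs' = map tlbl rs \<and> map tvec rs' = map tvec rs"
  using assms
proof (induction rs' arbitrary: x)
  case (Cons t' ts')
  have t': "t' \<in> pa_trans (seg_pa A p f)" "tsrc t' = Suc x" "path (seg_pa A p f) (ttgt t') ts' 0"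
    using Cons.prems by auto
  from t'(1) show ?case
    unfolding seg_pa_trans
  proof (elim disjE exE conjE)
    fix x' a v y assume t'_eq: "t' = (Suc x', a, v, Suc y)" and "(x', a, v, y) \<in> pa_trans A" "y \<notin> pa_final A"
    moreover obtain rs where "rs \<noteq> []" "path A y rs f" "\<forall>t\<in>set (butlast rs). ttgt t \<notin> pa_final A"
      "map tlbl ts' = map tlbl rs" "map tvec ts' = map tvec rs"
      using Cons.IH[of y] t' t'_eq by auto
    ultimately show ?thesis
      using t'(2) by (intro exI[of _ "(x, a, v, y) # rs"]) auto
  next
    fix x' a v assume t'_eq: "t' = (Suc x', a, v, 0)" and "(x', a, v, f) \<in> pa_trans A"
    moreover have "ts' = []"
      using t'(3) t'_eq by (cases ts') (auto simp: seg_pa_trans)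
    ultimately show ?thesis
      using t'(2) by (intro exI[of _ "[(x, a, v, f)]"]) auto
  qed
qed simp

lemma pa_lang_seg_pa: "pa_lang (seg_pa A p f) = seg_lang A p f"
proof (intro set_eqI iffI)
  fix w assume "w \<in> pa_lang (seg_pa A p f)"
  then obtain rs' where rs': "w = map tlbl rs'" "path (seg_pa A p f) (Suc p) rs' 0"
    "rho (pa_dim A) rs' \<in> pa_constr A"
    unfolding pa_lang_path by auto
  obtain rs where "rs \<noteq> []" "path A p rs f" "\<forall>t\<in>set (butlast rs). ttgt t \<notin> pa_final A"
     "map tlbl rs' = map tlbl rs" "map tvec rs' = map tvec rs"
    using path_of_seg_pa_path[OF rs'(2)] by blast
  then show "w \<in> seg_lang A p f"
    unfolding seg_lang_def using rs' rho_cong[of rs' rs "pa_dim A"] by (intro CollectI exI[of _ rs]) simp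
next
  fix w assume "w \<in> seg_lang A p f"
  then obtain rs where rs: "w = map tlbl rs" "rs \<noteq> []" "path A p rs f"
    "\<forall>t\<in>set (butlast rs). ttgt t \<notin> pa_final A" "rho (pa_dim A) rs \<in> pa_constr A"
    unfolding seg_lang_def by blast
  obtain rs' where "path (seg_pa A p f) (Suc p) rs' 0" "map tlbl rs' = map tlbl rs" "map tvec rs' = map tvec rs"
    using seg_pa_path_of_path[OF rs(2-4)] by blast
  then show "w \<in> pa_lang (seg_pa A p f)"
    unfolding pa_lang_path using rs rho_cong[of rs' rs "pa_dim A"] by (intro CollectI exI[of _ rs'] exI[of _ 0]) simp
qed

lemma wf_seg_pa:
  assumes "wf_pa A" "p \<in> pa_states A"
  shows "wf_pa (seg_pa A p f)"
proof -
  have "pa_trans (seg_pa A p f) \<subseteq>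
      (\<lambda>(x, a, v, y). (Suc x, a, v, Suc y)) ` pa_trans A \<union> (\<lambda>(x, a, v, y). (Suc x, a, v, 0)) ` pa_trans A"
    by (auto simp: seg_pa_trans image_iff) force+
  then have "finite (pa_trans (seg_pa A p f))"
    using assms(1) unfolding wf_pa_def by (meson finite_Un finite_imageI finite_subset)
  moreover have "x \<in> pa_states (seg_pa A p f) \<and> y \<in> pa_states (seg_pa A p f) \<and> length v = pa_dim A"
    if "(x, a, v, y) \<in> pa_trans (seg_pa A p f)" for x a v y
    using that assms(1) unfolding seg_pa_trans wf_pa_def by fastforce
  then have "\<forall>(x, a, v, y) \<in> pa_trans (seg_pa A p f).
      x \<in> pa_states (seg_pa A p f) \<and> y \<in> pa_states (seg_pa A p f) \<and> length v = pa_dim (seg_pa A p f)"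
    by auto
  ultimately show ?thesis
    using assms unfolding wf_pa_def by simp
qed

lemma parikh_recognizable_seg_lang: "wf_pa A \<Longrightarrow> p \<in> pa_states A \<Longrightarrow> parikh_recognizable (seg_lang A p f)"
  unfolding parikh_recognizable_def using wf_seg_pa pa_lang_seg_pa by metis

section \<open>Automata with final states in leaves recognize unions of \<open>U V\<^sup>\<omega>\<close>\<close>

lemma seg_lang_Nil: "[] \<notin> seg_lang A p q"
  unfolding seg_lang_def by auto

lemma seg_lang_rtrancl: "w \<in> seg_lang A p q \<Longrightarrow> (p, q) \<in> (pa_edges A)\<^sup>*"
  unfolding seg_lang_def using path_rtrancl by blast

lemma leaf_scc_closed:
  assumes "is_leaf_scc A S" "u \<in> S" "(u, v) \<in> (pa_edges A)\<^sup>*"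
  shows "v \<in> S"
  using assms(3,2) by induction (use assms(1) in \<open>auto simp: is_leaf_scc_def\<close>)

lemma finite_leaf_scc: "wf_pa A \<Longrightarrow> is_leaf_scc A S \<Longrightarrow> finite S"
  unfolding is_leaf_scc_def sccs_def scc_of_def wf_pa_def by (auto intro: finite_subset)

lemma scc_of_eq: "p \<in> scc_of A q \<Longrightarrow> scc_of A p = scc_of A q"
  unfolding scc_of_def by (auto intro: rtrancl_trans)

lemma leaf_scc_eq_scc_of:
  assumes "is_leaf_scc A S" "f \<in> S"
  shows "S = scc_of A f" "f \<in> pa_states A"
proof -
  obtain q where "S = scc_of A q"
    using assms(1) unfolding is_leaf_scc_def sccs_def by blast
  then show "S = scc_of A f" "f \<in> pa_states A"
    using assms(2) scc_of_eq unfolding scc_of_def by blast+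
qed

lemma final_reachable_from_final:
  assumes "wf_pa A" "final_only_in_leaves A"
    and "f \<in> pa_final A" "g \<in> pa_final A" "(f, g) \<in> (pa_edges A)\<^sup>*"
  shows "g = f"
proof -
  obtain S where S: "is_leaf_scc A S" "f \<in> S"
    using assms(2,3) unfolding final_only_in_leaves_def by blast
  then have "g \<in> S"
    using leaf_scc_closed assms(5) by blast
  moreover have "card (S \<inter> pa_final A) \<le> 1"
    using assms(2) S(1) unfolding final_only_in_leaves_def by blast
  moreover have "finite (S \<inter> pa_final A)"
    using finite_leaf_scc[OF assms(1) S(1)] by blast
  ultimately show ?thesis
    using S(2) assms(3,4) by (auto simp: card_le_Suc0_iff_eq)
qed

lemma spba_lang_leaf_decomposition:
  assumes "wf_pa A" "final_only_in_leaves A"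
  shows "spba_lang A = (\<Union>f\<in>pa_final A. conc_omega (seg_lang A (pa_init A) f) (omega_pow (seg_lang A f f)))"
proof (intro set_eqI iffI)
  fix \<alpha> assume "\<alpha> \<in> spba_lang A"
  then obtain fs ws where fact: "seg_factorization A fs ws \<alpha>"
    unfolding spba_lang_iff_seg_factorization by blast
  then have final: "fs (Suc n) \<in> pa_final A" and seg: "ws n \<in> seg_lang A (fs n) (fs (Suc n))" for n
    unfolding seg_factorization_def by blast+
  define f where "f = fs 1"
  have fs_f: "fs (Suc n) = f" for n
  proof (induction n)
    case (Suc n)
    then show ?case
      using final_reachable_from_final[OF assms final final] seg_lang_rtrancl[OF seg]
      by (metis f_def One_nat_def)
  qed (simp add: f_def)
  have "ws 0 \<in> seg_lang A (pa_init A) f"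
    using seg[of 0] fs_f[of 0] fact unfolding seg_factorization_def by simp
  moreover have "ws (Suc n) \<in> seg_lang A f f \<and> ws (Suc n) \<noteq> []" for n
    using seg[of "Suc n"] fs_f[of n] fs_f[of "Suc n"] seg_lang_Nil by fastforce
  ultimately have "\<alpha> \<in> conc_omega (seg_lang A (pa_init A) f) (omega_pow (seg_lang A f f))"
    unfolding conc_omega_omega_pow_iff using fact unfolding seg_factorization_def by blast
  moreover have "f \<in> pa_final A"
    using final[of 0] by (simp add: f_def)
  ultimately show "\<alpha> \<in> (\<Union>f\<in>pa_final A. conc_omega (seg_lang A (pa_init A) f) (omega_pow (seg_lang A f f)))"
    by blast
next
  fix \<alpha> assume "\<alpha> \<in> (\<Union>f\<in>pa_final A. conc_omega (seg_lang A (pa_init A) f) (omega_pow (seg_lang A f f)))"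
  then obtain f where "f \<in> pa_final A" "\<alpha> \<in> conc_omega (seg_lang A (pa_init A) f) (omega_pow (seg_lang A f f))"
    by blast
  moreover from this(2) obtain ws where "ws 0 \<in> seg_lang A (pa_init A) f"
    "\<forall>n. ws (Suc n) \<in> seg_lang A f f" "inf_concat ws \<alpha>"
    unfolding conc_omega_omega_pow_iff by blast
  ultimately have "seg_factorization A (case_nat (pa_init A) (\<lambda>_. f)) ws \<alpha>"
    unfolding seg_factorization_def by (auto split: nat.split)
  then show "\<alpha> \<in> spba_lang A"
    unfolding spba_lang_iff_seg_factorization by blast
qed

lemma Union_conc_omega_of_leaf_spba:
  assumes "wf_pa A" "final_only_in_leaves A"
  obtains UVs :: "('a list set \<times> 'a list set) list"
  where "\<forall>(U, V) \<in> set UVs. parikh_recognizable U \<and> parikh_recognizable V"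
    and "spba_lang A = (\<Union>(U, V) \<in> set UVs. conc_omega U (omega_pow V))"
proof -
  have "finite (pa_final A)" "pa_final A \<subseteq> pa_states A" "pa_init A \<in> pa_states A"
    using assms(1) unfolding wf_pa_def by (auto intro: finite_subset)
  then show thesis
    using that[of "map (\<lambda>f. (seg_lang A (pa_init A) f, seg_lang A f f)) (sorted_list_of_set (pa_final A))"]
      parikh_recognizable_seg_lang[OF assms(1)] spba_lang_leaf_decomposition[OF assms]
    by auto
qed

section \<open>An automaton for \<open>U V\<^sup>\<omega>\<close>\<close>

definition ustate :: "nat \<Rightarrow> nat" where
  "ustate q = 3 * q + 1"

definition vstate :: "nat \<Rightarrow> nat" where
  "vstate q = 3 * q + 2"

lemma ustate_vstate_simps [simp]:
  "ustate p \<noteq> 0" "vstate p \<noteq> 0" "ustate p \<noteq> vstate q" "vstate q \<noteq> ustate p"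
  "ustate p = ustate q \<longleftrightarrow> p = q" "vstate p = vstate q \<longleftrightarrow> p = q" "0 < ustate p" "0 < vstate p"
  unfolding ustate_def vstate_def by presburger+

definition reaches_final :: "'a pa \<Rightarrow> nat \<Rightarrow> bool" where
  "reaches_final R q \<longleftrightarrow> (\<exists>g\<in>pa_final R. (q, g) \<in> (pa_edges R)\<^sup>+)"

definition v_targets :: "'a pa \<Rightarrow> nat \<Rightarrow> nat set" where
  "v_targets R q = (if reaches_final R q then {vstate q} else {}) \<union> (if q \<in> pa_final R then {0} else {})"

lemma zero_in_v_targets: "0 \<in> v_targets R q \<longleftrightarrow> q \<in> pa_final R"
  unfolding v_targets_def by auto

lemma v_targets_nonzero: "z \<in> v_targets R q \<Longrightarrow> z \<noteq> 0 \<Longrightarrow> z = vstate q \<and> reaches_final R q"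
  unfolding v_targets_def by (auto split: if_splits)

lemma vstate_in_v_targets: "reaches_final R q \<Longrightarrow> vstate q \<in> v_targets R q"
  unfolding v_targets_def by auto

definition v_trans :: "nat \<Rightarrow> 'a pa \<Rightarrow> nat \<Rightarrow> nat \<Rightarrow> nat list \<Rightarrow> 'a ptrans set" where
  "v_trans d R src p flag =
     {(src, a, zeros d @ y @ flag, z) | a y q z. (p, a, y, q) \<in> pa_trans R \<and> z \<in> v_targets R q}"

definition u_trans :: "nat \<Rightarrow> 'a pa \<Rightarrow> 'a ptrans set" where
  "u_trans e P = {(ustate p, a, x @ zeros e @ [0, 0], ustate q) | p a x q. (p, a, x, q) \<in> pa_trans P}"

text \<open>A segment ending in \<open>0\<close> either starts in
  \<open>ustate (pa_init P)\<close>, runs through the copy of \<open>P\<close> and switches to \<open>R\<close> in a final state of \<open>P\<close>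
  (flag \<open>[1, 0]\<close>), or starts in \<open>0\<close> and runs through \<open>R\<close> only (flag \<open>[0, 1]\<close>); the flags let the
  constraint tell the two kinds apart. Copies \<open>vstate q\<close> of states of \<open>R\<close> are entered only if
  \<open>q\<close> can still reach a final state, which makes the component of \<open>0\<close> a leaf.\<close>
definition omega_trans :: "'a pa \<Rightarrow> 'a pa \<Rightarrow> 'a ptrans set" where
  "omega_trans P R = u_trans (pa_dim R) P \<union> (\<Union>p. v_trans (pa_dim P) R (vstate p) p [0, 0]) \<union>
     (\<Union>p\<in>pa_final P. v_trans (pa_dim P) R (ustate p) (pa_init R) [1, 0]) \<union>
     v_trans (pa_dim P) R 0 (pa_init R) [0, 1]"

definition omega_pa :: "'a pa \<Rightarrow> 'a pa \<Rightarrow> 'a pa" where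
  "omega_pa P R = \<lparr>pa_dim = pa_dim P + (pa_dim R + 2),
     pa_states = insert 0 (ustate ` pa_states P \<union> vstate ` pa_states R),
     pa_init = ustate (pa_init P), pa_trans = omega_trans P R, pa_final = {0},
     pa_constr = vprod (pa_constr P) (vprod (pa_constr R) {[1, 0]}) \<union>
                 vprod {zeros (pa_dim P)} (vprod (pa_constr R) {[0, 1]})\<rparr>"

lemma omega_pa_sel [simp]:
  "pa_dim (omega_pa P R) = pa_dim P + (pa_dim R + 2)"
  "pa_states (omega_pa P R) = insert 0 (ustate ` pa_states P \<union> vstate ` pa_states R)"
  "pa_init (omega_pa P R) = ustate (pa_init P)" "pa_trans (omega_pa P R) = omega_trans P R"
  "pa_final (omega_pa P R) = {0}"
  "pa_constr (omega_pa P R) = vprod (pa_constr P) (vprod (pa_constr R) {[1, 0]}) \<union>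
                 vprod {zeros (pa_dim P)} (vprod (pa_constr R) {[0, 1]})"
  by (simp_all add: omega_pa_def)

lemma v_trans_src: "t \<in> v_trans d R src p flag \<Longrightarrow> tsrc t = src"
  unfolding v_trans_def by auto

lemma u_transE:
  assumes "t \<in> u_trans e P"
  obtains p a x q where "t = (ustate p, a, x @ zeros e @ [0, 0], ustate q)" "(p, a, x, q) \<in> pa_trans P"
  using assms unfolding u_trans_def by auto

lemma v_transE:
  assumes "t \<in> v_trans d R src p flag"
  obtains a y q z where "t = (src, a, zeros d @ y @ flag, z)" "(p, a, y, q) \<in> pa_trans R" "z \<in> v_targets R q"
  using assms unfolding v_trans_def by auto

lemma v_trans_subset_omega_trans:
  "v_trans (pa_dim P) R (vstate p) p [0, 0] \<subseteq> omega_trans P R"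
  "v_trans (pa_dim P) R 0 (pa_init R) [0, 1] \<subseteq> omega_trans P R"
  "p \<in> pa_final P \<Longrightarrow> v_trans (pa_dim P) R (ustate p) (pa_init R) [1, 0] \<subseteq> omega_trans P R"
  unfolding omega_trans_def by blast+

lemma u_trans_subset_omega_trans: "u_trans (pa_dim R) P \<subseteq> omega_trans P R"
  unfolding omega_trans_def by blast

lemma omega_trans_cases:
  assumes "t \<in> omega_trans P R"
  obtains (U) "t \<in> u_trans (pa_dim R) P"
  | (V) p where "t \<in> v_trans (pa_dim P) R (vstate p) p [0, 0]" "tsrc t = vstate p"
  | (UV) p where "p \<in> pa_final P" "t \<in> v_trans (pa_dim P) R (ustate p) (pa_init R) [1, 0]" "tsrc t = ustate p"
  | (ZV) "t \<in> v_trans (pa_dim P) R 0 (pa_init R) [0, 1]" "tsrc t = 0"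
proof -
  have "t \<in> u_trans (pa_dim R) P \<or> (\<exists>p. t \<in> v_trans (pa_dim P) R (vstate p) p [0, 0]) \<or>
      (\<exists>p\<in>pa_final P. t \<in> v_trans (pa_dim P) R (ustate p) (pa_init R) [1, 0]) \<or>
      t \<in> v_trans (pa_dim P) R 0 (pa_init R) [0, 1]"
    using assms unfolding omega_trans_def by blast
  then show thesis
  proof (elim disjE exE bexE)
    assume "t \<in> u_trans (pa_dim R) P"
    then show thesis by (rule U)
  next
    fix p assume "t \<in> v_trans (pa_dim P) R (vstate p) p [0, 0]"
    then show thesis using V v_trans_src by blast
  next
    fix p assume "p \<in> pa_final P" "t \<in> v_trans (pa_dim P) R (ustate p) (pa_init R) [1, 0]"
    then show thesis using UV v_trans_src by blast
  next
    assume zv: "t \<in> v_trans (pa_dim P) R 0 (pa_init R) [0, 1]"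
    show thesis by (rule ZV[OF zv v_trans_src[OF zv]])
  qed
qed

lemma omega_trans_from_vstate:
  "t \<in> omega_trans P R \<Longrightarrow> tsrc t = vstate p \<Longrightarrow> t \<in> v_trans (pa_dim P) R (vstate p) p [0, 0]"
  by (cases rule: omega_trans_cases) (auto elim: u_transE)

lemma omega_trans_from_0:
  "t \<in> omega_trans P R \<Longrightarrow> tsrc t = 0 \<Longrightarrow> t \<in> v_trans (pa_dim P) R 0 (pa_init R) [0, 1]"
  by (cases rule: omega_trans_cases) (auto elim: u_transE)

lemma omega_trans_from_ustate:
  "t \<in> omega_trans P R \<Longrightarrow> tsrc t = ustate p \<Longrightarrow>
    t \<in> u_trans (pa_dim R) P \<or> (p \<in> pa_final P \<and> t \<in> v_trans (pa_dim P) R (ustate p) (pa_init R) [1, 0])"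
  by (cases rule: omega_trans_cases) auto

lemma v_trans_memI:
  "(p, a, y, q) \<in> pa_trans R \<Longrightarrow> z \<in> v_targets R q \<Longrightarrow> (src, a, zeros d @ y @ flag, z) \<in> v_trans d R src p flag"
  unfolding v_trans_def by blast

lemma rho_singleton: "length (tvec t) = d \<Longrightarrow> rho d [t] = tvec t"
  by simp

lemma r_path_of_v_path:
  assumes "wf_pa R"
  shows "path (omega_pa P R) src rs 0 \<Longrightarrow> rs \<noteq> [] \<Longrightarrow> hd rs \<in> v_trans (pa_dim P) R src p [c1, c2] \<Longrightarrow>
    \<forall>t\<in>set (butlast rs). ttgt t \<noteq> 0 \<Longrightarrow>
    \<exists>rs' g. rs' \<noteq> [] \<and> path R p rs' g \<and> g \<in> pa_final R \<and> map tlbl rs = map tlbl rs' \<and>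
      rho (pa_dim (omega_pa P R)) rs = zeros (pa_dim P) @ rho (pa_dim R) rs' @ [c1, c2]"
proof (induction rs arbitrary: src p c1 c2)
  case (Cons t ts)
  obtain a y q z where t: "t = (src, a, zeros (pa_dim P) @ y @ [c1, c2], z)" "(p, a, y, q) \<in> pa_trans R"
    "z \<in> v_targets R q"
    using Cons.prems(3) by (auto elim: v_transE)
  have y: "length y = pa_dim R"
    using wf_pa_trans[OF assms t(2)] by simp
  have ts: "path (omega_pa P R) z ts 0"
    using Cons.prems(1) t by simp
  show ?case
  proof (cases "ts = []")
    case True
    then have "q \<in> pa_final R"
      using ts t(3) zero_in_v_targets by fastforce
    then show ?thesis
      using True t y Cons.prems
      by (intro exI[of _ "[(p, a, y, q)]"] exI[of _ q]) (simp del: rho_Cons add: rho_singleton)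
  next
    case False
    then have "z \<noteq> 0"
      using Cons.prems(4) t by auto
    then have "z = vstate q"
      using v_targets_nonzero[OF t(3)] by blast
    then have hd: "hd ts \<in> v_trans (pa_dim P) R (vstate q) q [0, 0]"
      using ts False by (cases ts) (auto intro: omega_trans_from_vstate)
    have "\<forall>t\<in>set (butlast ts). ttgt t \<noteq> 0"
      using Cons.prems(4) False by simp
    then obtain rs' g where rs': "rs' \<noteq> []" "path R q rs' g" "g \<in> pa_final R" "map tlbl ts = map tlbl rs'"
      "rho (pa_dim (omega_pa P R)) ts = zeros (pa_dim P) @ rho (pa_dim R) rs' @ [0, 0]"
      using Cons.IH[OF ts[unfolded \<open>z = vstate q\<close>] False hd] by auto
    moreover have "length (rho (pa_dim R) rs') = pa_dim R"
      using length_rho_path[OF assms rs'(2)] .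
    ultimately show ?thesis
      using t y Cons.prems by (intro exI[of _ "(p, a, y, q) # rs'"] exI[of _ g]) (simp add: vadd_blocks)
  qed
qed simp

lemma v_path_of_r_path:
  assumes "wf_pa R"
  shows "v_trans (pa_dim P) R src p [c1, c2] \<subseteq> omega_trans P R \<Longrightarrow>
    path R p rs' g \<Longrightarrow> g \<in> pa_final R \<Longrightarrow> rs' \<noteq> [] \<Longrightarrow>
    \<exists>rs. rs \<noteq> [] \<and> path (omega_pa P R) src rs 0 \<and> (\<forall>t\<in>set (butlast rs). ttgt t \<noteq> 0) \<and>
      map tlbl rs = map tlbl rs' \<and> rho (pa_dim (omega_pa P R)) rs = zeros (pa_dim P) @ rho (pa_dim R) rs' @ [c1, c2]"
proof (induction rs' arbitrary: src p c1 c2)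
  case (Cons t' ts')
  obtain a y q where t': "t' = (p, a, y, q)" "(p, a, y, q) \<in> pa_trans R" "path R q ts' g"
    using Cons.prems(2) ptrans_eq[of t'] by (metis path_Cons)
  have y: "length y = pa_dim R"
    using wf_pa_trans[OF assms(1) t'(2)] by simp
  show ?case
  proof (cases "ts' = []")
    case True
    then have "q \<in> pa_final R"
      using t'(3) Cons.prems(3) by simp
    then have "(src, a, zeros (pa_dim P) @ y @ [c1, c2], 0) \<in> omega_trans P R"
      using Cons.prems(1) v_trans_memI[OF t'(2)] zero_in_v_targets by blast
    then show ?thesis
      using True t' y Cons.prems
      by (intro exI[of _ "[(src, a, zeros (pa_dim P) @ y @ [c1, c2], 0)]"]) (simp del: rho_Cons add: rho_singleton)
  next
    case False
    then have "reaches_final R q"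
      unfolding reaches_final_def using path_trancl[OF t'(3)] Cons.prems(3) by blast
    then have "(src, a, zeros (pa_dim P) @ y @ [c1, c2], vstate q) \<in> omega_trans P R"
      using Cons.prems(1) v_trans_memI[OF t'(2)] vstate_in_v_targets by blast
    moreover obtain rs where rs: "rs \<noteq> []" "path (omega_pa P R) (vstate q) rs 0"
      "\<forall>t\<in>set (butlast rs). ttgt t \<noteq> 0" "map tlbl rs = map tlbl ts'"
      "rho (pa_dim (omega_pa P R)) rs = zeros (pa_dim P) @ rho (pa_dim R) ts' @ [0, 0]"
      using Cons.IH[OF v_trans_subset_omega_trans(1) t'(3) Cons.prems(3) False] by auto
    moreover have "length (rho (pa_dim R) ts') = pa_dim R"
      using length_rho_path[OF assms(1) t'(3)] .
    ultimately show ?thesis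
      using t' y Cons.prems
      by (intro exI[of _ "(src, a, zeros (pa_dim P) @ y @ [c1, c2], vstate q) # rs"]) (simp add: vadd_blocks)
  qed
qed simp

lemma pr_paths_of_u_path:
  assumes "wf_pa P" "wf_pa R"
  shows "path (omega_pa P R) (ustate p) rs 0 \<Longrightarrow> rs \<noteq> [] \<Longrightarrow> \<forall>t\<in>set (butlast rs). ttgt t \<noteq> 0 \<Longrightarrow>
   \<exists>us p' vs g. path P p us p' \<and> p' \<in> pa_final P \<and> path R (pa_init R) vs g \<and> g \<in> pa_final R \<and> vs \<noteq> [] \<and>
     map tlbl rs = map tlbl us @ map tlbl vs \<and>
     rho (pa_dim (omega_pa P R)) rs = rho (pa_dim P) us @ rho (pa_dim R) vs @ [1, 0]"
proof (induction rs arbitrary: p)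
  case (Cons t ts)
  have t: "t \<in> omega_trans P R" "tsrc t = ustate p" and ts: "path (omega_pa P R) (ttgt t) ts 0"
    using Cons.prems(1) by auto
  from omega_trans_from_ustate[OF t] show ?case
  proof
    assume "t \<in> u_trans (pa_dim R) P"
    then obtain a x q where t_eq: "t = (ustate p, a, x @ zeros (pa_dim R) @ [0, 0], ustate q)"
      and pq: "(p, a, x, q) \<in> pa_trans P"
      using t(2) by (auto elim: u_transE)
    have "ts \<noteq> []"
      using ts t_eq by (cases ts) auto
    then obtain us p' vs g where r: "path P q us p'" "p' \<in> pa_final P" "path R (pa_init R) vs g"
      "g \<in> pa_final R" "vs \<noteq> []" "map tlbl ts = map tlbl us @ map tlbl vs"
      "rho (pa_dim (omega_pa P R)) ts = rho (pa_dim P) us @ rho (pa_dim R) vs @ [1, 0]"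
      using Cons.IH[of q] ts t_eq Cons.prems(3) by auto
    moreover have "length x = pa_dim P"
      using wf_pa_trans[OF assms(1) pq] by simp
    moreover have "length (rho (pa_dim P) us) = pa_dim P" "length (rho (pa_dim R) vs) = pa_dim R"
      using length_rho_path[OF assms(1) r(1)] length_rho_path[OF assms(2) r(3)] .
    ultimately show ?thesis
      using t_eq pq
      by (intro exI[of _ "(p, a, x, q) # us"] exI[of _ p'] exI[of _ vs] exI[of _ g]) (simp add: vadd_blocks)
  next
    assume v: "p \<in> pa_final P \<and> t \<in> v_trans (pa_dim P) R (ustate p) (pa_init R) [1, 0]"
    then have "hd (t # ts) \<in> v_trans (pa_dim P) R (ustate p) (pa_init R) [1, 0]"
      by simp
    then obtain vs g where "vs \<noteq> []" "path R (pa_init R) vs g" "g \<in> pa_final R"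
      "map tlbl (t # ts) = map tlbl vs"
      "rho (pa_dim (omega_pa P R)) (t # ts) = zeros (pa_dim P) @ rho (pa_dim R) vs @ [1, 0]"
      using r_path_of_v_path[OF assms(2) Cons.prems(1,2) _ Cons.prems(3)] by blast
    then show ?thesis
      using v by (intro exI[of _ "[]"] exI[of _ p] exI[of _ vs] exI[of _ g]) simp
  qed
qed simp

lemma u_path_of_pr_paths:
  assumes "wf_pa P" "wf_pa R" and p': "p' \<in> pa_final P"
    and vs: "path R (pa_init R) vs g" "g \<in> pa_final R" "vs \<noteq> []"
  shows "path P p us p' \<Longrightarrow>
    \<exists>rs. rs \<noteq> [] \<and> path (omega_pa P R) (ustate p) rs 0 \<and> (\<forall>t\<in>set (butlast rs). ttgt t \<noteq> 0) \<and>
      map tlbl rs = map tlbl us @ map tlbl vs \<and>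
      rho (pa_dim (omega_pa P R)) rs = rho (pa_dim P) us @ rho (pa_dim R) vs @ [1, 0]"
proof (induction us arbitrary: p)
  case Nil
  then show ?case
    using v_path_of_r_path[OF assms(2) v_trans_subset_omega_trans(3)[OF p'] vs] by simp
next
  case (Cons t' ts')
  obtain a x q where t': "t' = (p, a, x, q)" "(p, a, x, q) \<in> pa_trans P" "path P q ts' p'"
    using Cons.prems ptrans_eq[of t'] by (metis path_Cons)
  define t where "t = (ustate p, a, x @ zeros (pa_dim R) @ [0, 0], ustate q)"
  have "t \<in> u_trans (pa_dim R) P"
    unfolding u_trans_def t_def using t'(2) by blast
  then have "t \<in> omega_trans P R"
    using u_trans_subset_omega_trans by blast
  moreover obtain rs where "rs \<noteq> []" "path (omega_pa P R) (ustate q) rs 0" "\<forall>t\<in>set (butlast rs). ttgt t \<noteq> 0"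
     "map tlbl rs = map tlbl ts' @ map tlbl vs"
     "rho (pa_dim (omega_pa P R)) rs = rho (pa_dim P) ts' @ rho (pa_dim R) vs @ [1, 0]"
    using Cons.IH[OF t'(3)] by blast
  moreover have "length x = pa_dim P"
    using wf_pa_trans[OF assms(1) t'(2)] by simp
  moreover have "length (rho (pa_dim P) ts') = pa_dim P" "length (rho (pa_dim R) vs) = pa_dim R"
    using length_rho_path[OF assms(1) t'(3)] length_rho_path[OF assms(2) vs(1)] .
  ultimately show ?case
    using t' by (intro exI[of _ "t # rs"]) (simp add: t_def vadd_blocks)
qed

lemma append_in_omega_constr_iff:
  assumes "wf_pa P" "wf_pa R" "length a = pa_dim P" "length b = pa_dim R"
  shows "a @ b @ [1, 0] \<in> pa_constr (omega_pa P R) \<longleftrightarrow> a \<in> pa_constr P \<and> b \<in> pa_constr R"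
proof -
  have lP: "\<forall>x\<in>pa_constr P. length x = pa_dim P" and lR: "\<forall>x\<in>pa_constr R. length x = pa_dim R"
    using assms(1,2) semilinear_length unfolding wf_pa_def by blast+
  have "a @ b @ [1, 0] \<notin> vprod {zeros (pa_dim P)} (vprod (pa_constr R) {[0, 1]})"
    using append_in_vprod_iff[of "{zeros (pa_dim P)}" "pa_dim P" a] append_in_vprod_iff[OF lR assms(4)] assms(3)
    by auto
  moreover have "a @ b @ [1, 0] \<in> vprod (pa_constr P) (vprod (pa_constr R) {[1, 0]}) \<longleftrightarrow>
      a \<in> pa_constr P \<and> b \<in> pa_constr R"
    using append_in_vprod_iff[OF lP assms(3)] append_in_vprod_iff[OF lR assms(4)] by auto
  ultimately show ?thesis
    by simp
qed

lemma zeros_append_in_omega_constr_iff: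
  assumes "wf_pa P" "wf_pa R" "length b = pa_dim R"
  shows "zeros (pa_dim P) @ b @ [0, 1] \<in> pa_constr (omega_pa P R) \<longleftrightarrow> b \<in> pa_constr R"
proof -
  have lP: "\<forall>x\<in>pa_constr P. length x = pa_dim P" and lR: "\<forall>x\<in>pa_constr R. length x = pa_dim R"
    using assms(1,2) semilinear_length unfolding wf_pa_def by blast+
  have "zeros (pa_dim P) @ b @ [0, 1] \<notin> vprod (pa_constr P) (vprod (pa_constr R) {[1, 0]})"
    using append_in_vprod_iff[OF lP, of "zeros (pa_dim P)"] append_in_vprod_iff[OF lR assms(3)] by auto
  moreover have "zeros (pa_dim P) @ b @ [0, 1] \<in> vprod {zeros (pa_dim P)} (vprod (pa_constr R) {[0, 1]}) \<longleftrightarrow>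
      b \<in> pa_constr R"
    using append_in_vprod_iff[of "{zeros (pa_dim P)}" "pa_dim P" "zeros (pa_dim P)"]
      append_in_vprod_iff[OF lR assms(3)] by auto
  ultimately show ?thesis
    by simp
qed

lemma seg_lang_omega_pa_0:
  assumes "wf_pa P" "wf_pa R"
  shows "seg_lang (omega_pa P R) 0 0 = {v \<in> pa_lang R. v \<noteq> []}"
proof (intro set_eqI iffI)
  fix w assume "w \<in> seg_lang (omega_pa P R) 0 0"
  then obtain rs where rs: "w = map tlbl rs" "rs \<noteq> []" "path (omega_pa P R) 0 rs 0"
    "\<forall>t\<in>set (butlast rs). ttgt t \<noteq> 0" "rho (pa_dim (omega_pa P R)) rs \<in> pa_constr (omega_pa P R)"
    unfolding seg_lang_def by auto
  have "hd rs \<in> omega_trans P R" "tsrc (hd rs) = 0"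
    using rs(2,3) by (cases rs; simp)+
  then have "hd rs \<in> v_trans (pa_dim P) R 0 (pa_init R) [0, 1]"
    by (rule omega_trans_from_0)
  then obtain vs g where vs: "vs \<noteq> []" "path R (pa_init R) vs g" "g \<in> pa_final R" "map tlbl rs = map tlbl vs"
    "rho (pa_dim (omega_pa P R)) rs = zeros (pa_dim P) @ rho (pa_dim R) vs @ [0, 1]"
    using r_path_of_v_path[OF assms(2) rs(3,2) _ rs(4)] by blast
  then have "rho (pa_dim R) vs \<in> pa_constr R"
    using rs(5) zeros_append_in_omega_constr_iff[OF assms length_rho_path[OF assms(2) vs(2)]] by simp
  then show "w \<in> {v \<in> pa_lang R. v \<noteq> []}"
    unfolding pa_lang_path using vs rs(1) by auto
next
  fix w assume "w \<in> {v \<in> pa_lang R. v \<noteq> []}"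
  then obtain vs g where vs: "w = map tlbl vs" "path R (pa_init R) vs g" "g \<in> pa_final R"
    "rho (pa_dim R) vs \<in> pa_constr R" "vs \<noteq> []"
    unfolding pa_lang_path by auto
  then obtain rs where rs: "rs \<noteq> []" "path (omega_pa P R) 0 rs 0" "\<forall>t\<in>set (butlast rs). ttgt t \<noteq> 0"
    "map tlbl rs = map tlbl vs" "rho (pa_dim (omega_pa P R)) rs = zeros (pa_dim P) @ rho (pa_dim R) vs @ [0, 1]"
    using v_path_of_r_path[OF assms(2) v_trans_subset_omega_trans(2)] by blast
  then have "rho (pa_dim (omega_pa P R)) rs \<in> pa_constr (omega_pa P R)"
    using vs(4) zeros_append_in_omega_constr_iff[OF assms length_rho_path[OF assms(2) vs(2)]] by simp
  then show "w \<in> seg_lang (omega_pa P R) 0 0"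
    unfolding seg_lang_def using rs vs(1) by (intro CollectI exI[of _ rs]) auto
qed

lemma seg_lang_omega_pa_init:
  assumes "wf_pa P" "wf_pa R"
  shows "seg_lang (omega_pa P R) (ustate (pa_init P)) 0 = {u @ v | u v. u \<in> pa_lang P \<and> v \<in> pa_lang R \<and> v \<noteq> []}"
proof (intro set_eqI iffI)
  fix w assume "w \<in> seg_lang (omega_pa P R) (ustate (pa_init P)) 0"
  then obtain rs where rs: "w = map tlbl rs" "rs \<noteq> []" "path (omega_pa P R) (ustate (pa_init P)) rs 0"
    "\<forall>t\<in>set (butlast rs). ttgt t \<noteq> 0" "rho (pa_dim (omega_pa P R)) rs \<in> pa_constr (omega_pa P R)"
    unfolding seg_lang_def by auto
  obtain us p' vs g where r: "path P (pa_init P) us p'" "p' \<in> pa_final P" "path R (pa_init R) vs g"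
    "g \<in> pa_final R" "vs \<noteq> []" "map tlbl rs = map tlbl us @ map tlbl vs"
    "rho (pa_dim (omega_pa P R)) rs = rho (pa_dim P) us @ rho (pa_dim R) vs @ [1, 0]"
    using pr_paths_of_u_path[OF assms rs(3,2,4)] by blast
  have "rho (pa_dim P) us \<in> pa_constr P \<and> rho (pa_dim R) vs \<in> pa_constr R"
    using rs(5) r(7) append_in_omega_constr_iff[OF assms length_rho_path[OF assms(1) r(1)] length_rho_path[OF assms(2) r(3)]]
    by simp
  then have "map tlbl us \<in> pa_lang P" "map tlbl vs \<in> pa_lang R"
    unfolding pa_lang_path using r by blast+
  then show "w \<in> {u @ v | u v. u \<in> pa_lang P \<and> v \<in> pa_lang R \<and> v \<noteq> []}"
    using rs(1) r(5,6) by auto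
next
  fix w assume "w \<in> {u @ v | u v. u \<in> pa_lang P \<and> v \<in> pa_lang R \<and> v \<noteq> []}"
  then obtain u v where uv: "w = u @ v" "u \<in> pa_lang P" "v \<in> pa_lang R" "v \<noteq> []"
    by blast
  obtain us p' where us: "u = map tlbl us" "path P (pa_init P) us p'" "p' \<in> pa_final P"
    "rho (pa_dim P) us \<in> pa_constr P"
    using uv(2) unfolding pa_lang_path by blast
  obtain vs g where vs: "v = map tlbl vs" "path R (pa_init R) vs g" "g \<in> pa_final R"
    "rho (pa_dim R) vs \<in> pa_constr R"
    using uv(3) unfolding pa_lang_path by blast
  have "vs \<noteq> []"
    using vs(1) uv(4) by auto
  then obtain rs where rs: "rs \<noteq> []" "path (omega_pa P R) (ustate (pa_init P)) rs 0"
    "\<forall>t\<in>set (butlast rs). ttgt t \<noteq> 0" "map tlbl rs = map tlbl us @ map tlbl vs"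
    "rho (pa_dim (omega_pa P R)) rs = rho (pa_dim P) us @ rho (pa_dim R) vs @ [1, 0]"
    using u_path_of_pr_paths[OF assms us(3) vs(2,3) _ us(2)] by blast
  have "rho (pa_dim (omega_pa P R)) rs \<in> pa_constr (omega_pa P R)"
    using rs(5) us(4) vs(4)
      append_in_omega_constr_iff[OF assms length_rho_path[OF assms(1) us(2)] length_rho_path[OF assms(2) vs(2)]]
    by simp
  then show "w \<in> seg_lang (omega_pa P R) (ustate (pa_init P)) 0"
    unfolding seg_lang_def using rs uv(1) us(1) vs(1) by (intro CollectI exI[of _ rs]) auto
qed

lemma reaches_final_in_states:
  assumes "wf_pa R" "reaches_final R q"
  shows "q \<in> pa_states R"
proof -
  obtain g where "(q, g) \<in> (pa_edges R)\<^sup>+"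
    using assms(2) unfolding reaches_final_def by blast
  from tranclD[OF this] obtain q' where "(q, q') \<in> pa_edges R"
    by blast
  then obtain t where "t \<in> pa_trans R" "tsrc t = q"
    by (rule edgesE)
  then show ?thesis
    using wf_pa_trans(1)[OF assms(1)] by blast
qed

lemma v_trans_subset_image:
  "v_trans d R (f p) p flag \<subseteq>
    (\<lambda>(t, z). (f (tsrc t), tlbl t, zeros d @ tvec t @ flag, z)) ` (pa_trans R \<times> insert 0 (vstate ` ttgt ` pa_trans R))"
proof
  fix x assume "x \<in> v_trans d R (f p) p flag"
  then obtain a y q z where x: "x = (f p, a, zeros d @ y @ flag, z)" "(p, a, y, q) \<in> pa_trans R"
    "z \<in> v_targets R q"
    by (rule v_transE)
  then have "z \<in> insert 0 (vstate ` ttgt ` pa_trans R)"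
    unfolding v_targets_def by (force split: if_splits)
  then show "x \<in> (\<lambda>(t, z). (f (tsrc t), tlbl t, zeros d @ tvec t @ flag, z)) `
      (pa_trans R \<times> insert 0 (vstate ` ttgt ` pa_trans R))"
    using x by (intro image_eqI[where x = "((p, a, y, q), z)"]) auto
qed

lemma finite_omega_trans:
  assumes "wf_pa P" "wf_pa R"
  shows "finite (omega_trans P R)"
proof -
  have fin: "finite (pa_trans P)" "finite (pa_trans R)" "finite (pa_final P)"
    using assms unfolding wf_pa_def by (auto intro: finite_subset)
  have "finite (u_trans (pa_dim R) P)"
  proof (rule finite_subset)
    show "finite ((\<lambda>(p, a, x, q). (ustate p, a, x @ zeros (pa_dim R) @ [0, 0], ustate q)) ` pa_trans P)"
      using fin by simp
    show "u_trans (pa_dim R) P \<subseteq> (\<lambda>(p, a, x, q). (ustate p, a, x @ zeros (pa_dim R) @ [0, 0], ustate q)) ` pa_trans P"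
    proof
    fix t assume "t \<in> u_trans (pa_dim R) P"
    then obtain p a x q where "t = (ustate p, a, x @ zeros (pa_dim R) @ [0, 0], ustate q)" "(p, a, x, q) \<in> pa_trans P"
      by (rule u_transE)
    then show "t \<in> (\<lambda>(p, a, x, q). (ustate p, a, x @ zeros (pa_dim R) @ [0, 0], ustate q)) ` pa_trans P"
      by (intro image_eqI[where x = "(p, a, x, q)"]) auto
    qed
  qed
  moreover have "finite (v_trans (pa_dim P) R src p flag)" for src p flag
    by (rule finite_subset[OF v_trans_subset_image[where f = "\<lambda>_. src"]]) (simp add: fin)
  moreover have "finite (\<Union>p. v_trans (pa_dim P) R (vstate p) p flag)" for flag
    by (rule finite_subset[OF UN_least[OF v_trans_subset_image[where f = vstate]]]) (simp add: fin)
  ultimately show ?thesis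
    unfolding omega_trans_def using fin by simp
qed

lemma omega_trans_wf:
  assumes "wf_pa P" "wf_pa R" "t \<in> omega_trans P R"
  shows "tsrc t \<in> pa_states (omega_pa P R) \<and> ttgt t \<in> pa_states (omega_pa P R) \<and>
    length (tvec t) = pa_dim (omega_pa P R)"
proof -
  have v_wf: "p \<in> pa_states R \<and> ttgt t \<in> pa_states (omega_pa P R) \<and> length (tvec t) = pa_dim (omega_pa P R)"
    if v: "t \<in> v_trans (pa_dim P) R src p [c1, c2]" for src p c1 c2
  proof -
    obtain a y q z where t: "t = (src, a, zeros (pa_dim P) @ y @ [c1, c2], z)" "(p, a, y, q) \<in> pa_trans R"
      "z \<in> v_targets R q"
      using v by (rule v_transE)
    have "p \<in> pa_states R" "q \<in> pa_states R" "length y = pa_dim R"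
      using wf_pa_trans[OF assms(2) t(2)] by simp_all
    moreover have "z = 0 \<or> z = vstate q"
      using t(3) unfolding v_targets_def by (auto split: if_splits)
    ultimately show ?thesis
      using t(1) by auto
  qed
  from assms(3) show ?thesis
  proof (cases rule: omega_trans_cases)
    case U
    then obtain p a x q where "t = (ustate p, a, x @ zeros (pa_dim R) @ [0, 0], ustate q)" "(p, a, x, q) \<in> pa_trans P"
      by (rule u_transE)
    then show ?thesis
      using wf_pa_trans[OF assms(1), of "(p, a, x, q)"] by simp
  next
    case (V p)
    then show ?thesis
      using v_wf[OF V(1)] by simp
  next
    case (UV p)
    then show ?thesis
      using v_wf[OF UV(2)] assms(1) unfolding wf_pa_def by auto
  next
    case ZV
    then show ?thesis
      using v_wf[OF ZV(1)] by simp
  qed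
qed

lemma wf_omega_pa:
  assumes "wf_pa P" "wf_pa R"
  shows "wf_pa (omega_pa P R)"
proof -
  have sP: "semilinear (pa_dim P) (pa_constr P)" and sR: "semilinear (pa_dim R) (pa_constr R)"
    using assms unfolding wf_pa_def by blast+
  have "semilinear (pa_dim P + (pa_dim R + 2)) (vprod (pa_constr P) (vprod (pa_constr R) {[1, 0]}))"
    using semilinear_vprod[OF sP semilinear_vprod[OF sR semilinear_singleton[of "[1, 0]"]]] by simp
  moreover have "semilinear (pa_dim P + (pa_dim R + 2)) (vprod {zeros (pa_dim P)} (vprod (pa_constr R) {[0, 1]}))"
    using semilinear_vprod[OF semilinear_singleton[of "zeros (pa_dim P)"]
        semilinear_vprod[OF sR semilinear_singleton[of "[0, 1]"]]]
    by simp
  ultimately have "semilinear (pa_dim (omega_pa P R)) (pa_constr (omega_pa P R))"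
    by (simp add: semilinear_Un)
  moreover have "p \<in> pa_states (omega_pa P R) \<and> q \<in> pa_states (omega_pa P R) \<and> length v = pa_dim (omega_pa P R)"
    if "(p, a, v, q) \<in> pa_trans (omega_pa P R)" for p a v q
    using omega_trans_wf[OF assms, of "(p, a, v, q)"] that by simp
  then have "\<forall>(p, a, v, q) \<in> pa_trans (omega_pa P R). p \<in> pa_states (omega_pa P R) \<and>
      q \<in> pa_states (omega_pa P R) \<and> length v = pa_dim (omega_pa P R)"
    by blast
  moreover have "finite (pa_states (omega_pa P R))" "pa_init (omega_pa P R) \<in> pa_states (omega_pa P R)"
    using assms unfolding wf_pa_def by simp_all
  ultimately show ?thesis
    using finite_omega_trans[OF assms] unfolding wf_pa_def by simp
qed

lemma omega_trans_target:
  assumes "t \<in> omega_trans P R"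
  shows "(\<exists>p. tsrc t = ustate p) \<or> ttgt t = 0 \<or> (\<exists>q. ttgt t = vstate q \<and> reaches_final R q)"
proof -
  have "ttgt t = 0 \<or> (\<exists>q. ttgt t = vstate q \<and> reaches_final R q)"
    if "t \<in> v_trans (pa_dim P) R src p flag" for src p flag
    using that by (elim v_transE) (auto simp: v_targets_def split: if_splits)
  with assms show ?thesis
    by (cases rule: omega_trans_cases) (auto elim: u_transE)
qed

lemma reachable_from_0:
  "(0, u) \<in> (pa_edges (omega_pa P R))\<^sup>* \<Longrightarrow> u = 0 \<or> (\<exists>q. u = vstate q \<and> reaches_final R q)"
proof (induction rule: rtrancl_induct)
  case (step y z)
  obtain t where "t \<in> omega_trans P R" "tsrc t = y" "ttgt t = z"
    using step(2) by (auto elim: edgesE)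
  then show ?case
    using omega_trans_target step(3) by fastforce
qed simp

lemma vstate_reaches_0:
  assumes "reaches_final R q"
  shows "(vstate q, 0) \<in> (pa_edges (omega_pa P R))\<^sup>*"
proof -
  obtain g where g: "g \<in> pa_final R" "(q, g) \<in> (pa_edges R)\<^sup>+"
    using assms unfolding reaches_final_def by blast
  have edge: "(vstate y, z') \<in> pa_edges (omega_pa P R)"
    if yz: "(y, z) \<in> pa_edges R" and z': "z' \<in> v_targets R z" for y z z'
  proof -
    obtain t where "t \<in> pa_trans R" "tsrc t = y" "ttgt t = z"
      using yz by (rule edgesE)
    then have "(vstate y, tlbl t, zeros (pa_dim P) @ tvec t @ [0, 0], z') \<in> v_trans (pa_dim P) R (vstate y) y [0, 0]"
      using v_trans_memI[of y "tlbl t" "tvec t" z R z'] z' ptrans_eq[of t] by auto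
    then have "(vstate y, tlbl t, zeros (pa_dim P) @ tvec t @ [0, 0], z') \<in> omega_trans P R"
      using v_trans_subset_omega_trans(1) by blast
    then show ?thesis
      using trans_in_edges[of _ "omega_pa P R"] by fastforce
  qed
  from g(2) show ?thesis
  proof (induction rule: converse_trancl_induct)
    case (base y)
    then show ?case
      using edge[of y g 0] g(1) zero_in_v_targets by blast
  next
    case (step y z)
    then have "reaches_final R z"
      unfolding reaches_final_def using g(1) by blast
    then show ?case
      using edge[of y z "vstate z"] step vstate_in_v_targets by (meson converse_rtrancl_into_rtrancl)
  qed
qed

lemma final_only_in_leaves_omega_pa:
  assumes "wf_pa R"
  shows "final_only_in_leaves (omega_pa P R)"
proof -
  let ?S = "scc_of (omega_pa P R) 0"
  have return: "(v, 0) \<in> (pa_edges (omega_pa P R))\<^sup>* \<and> v \<in> pa_states (omega_pa P R)"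
    if "(0, v) \<in> (pa_edges (omega_pa P R))\<^sup>*" for v
    using reachable_from_0[OF that] vstate_reaches_0 reaches_final_in_states[OF assms] by auto
  have "is_leaf_scc (omega_pa P R) ?S"
    unfolding is_leaf_scc_def sccs_def
  proof (intro conjI)
    show "?S \<in> scc_of (omega_pa P R) ` pa_states (omega_pa P R)"
      by simp
    show "\<not> (\<exists>u\<in>?S. \<exists>v. (u, v) \<in> pa_edges (omega_pa P R) \<and> v \<notin> ?S)"
    proof
      assume "\<exists>u\<in>?S. \<exists>v. (u, v) \<in> pa_edges (omega_pa P R) \<and> v \<notin> ?S"
      then obtain u v where uv: "(0, u) \<in> (pa_edges (omega_pa P R))\<^sup>*" "(u, v) \<in> pa_edges (omega_pa P R)"
        and "v \<notin> ?S"
        unfolding scc_of_def by blast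
      moreover have "(0, v) \<in> (pa_edges (omega_pa P R))\<^sup>*"
        using uv by (rule rtrancl_into_rtrancl)
      ultimately show False
        using return unfolding scc_of_def by blast
    qed
  qed
  moreover have "0 \<in> ?S"
    unfolding scc_of_def by simp
  moreover have "card (S \<inter> pa_final (omega_pa P R)) \<le> 1" for S
    by (simp add: card_le_Suc0_iff_eq)
  ultimately show ?thesis
    unfolding final_only_in_leaves_def by auto
qed

lemma omega_pow_nonempty: "omega_pow {v \<in> Y. v \<noteq> []} = omega_pow Y"
  unfolding omega_pow_def by auto

lemma spba_lang_omega_pa:
  assumes "wf_pa P" "wf_pa R"
  shows "spba_lang (omega_pa P R) = conc_omega (pa_lang P) (omega_pow (pa_lang R))"
proof -
  have "spba_lang (omega_pa P R) =
      conc_omega (seg_lang (omega_pa P R) (ustate (pa_init P)) 0) (omega_pow (seg_lang (omega_pa P R) 0 0))"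
    using spba_lang_leaf_decomposition[OF wf_omega_pa[OF assms] final_only_in_leaves_omega_pa[OF assms(2)]]
    by simp
  also have "\<dots> = conc_omega {u @ v | u v. u \<in> pa_lang P \<and> v \<in> pa_lang R \<and> v \<noteq> []} (omega_pow (pa_lang R))"
    unfolding seg_lang_omega_pa_init[OF assms] seg_lang_omega_pa_0[OF assms] omega_pow_nonempty ..
  finally show ?thesis
    unfolding conc_omega_omega_pow_absorb .
qed

section \<open>Union of two automata\<close>

definition tag :: "bool \<Rightarrow> nat \<Rightarrow> nat" where
  "tag b q = 2 * q + 1 + of_bool b"

lemma tag_simps [simp]: "tag b p = tag c q \<longleftrightarrow> b = c \<and> p = q" "tag b p \<noteq> 0" "0 < tag b p"
  unfolding tag_def by (cases b; cases c; simp; presburger)+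

definition component :: "'a pa \<Rightarrow> 'a pa \<Rightarrow> bool \<Rightarrow> 'a pa" where
  "component A B b = (if b then B else A)"

text \<open>The last two coordinates count the transitions taken in the copy of \<open>A\<close> and in the copy of \<open>B\<close>;
  requiring the count to be positive lets the constraint tell segments of the two copies apart.\<close>
definition pad :: "nat \<Rightarrow> nat \<Rightarrow> bool \<Rightarrow> nat list \<Rightarrow> nat \<Rightarrow> nat list" where
  "pad dA dB b v n = (if b then zeros dA @ v @ [0, n] else v @ zeros dB @ [n, 0])"

definition lift_trans :: "nat \<Rightarrow> nat \<Rightarrow> bool \<Rightarrow> 'a ptrans \<Rightarrow> 'a ptrans" where
  "lift_trans dA dB b t = (tag b (tsrc t), tlbl t, pad dA dB b (tvec t) 1, tag b (ttgt t))"

definition start_trans :: "nat \<Rightarrow> nat \<Rightarrow> bool \<Rightarrow> 'a ptrans \<Rightarrow> 'a ptrans" where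
  "start_trans dA dB b t = (0, tlbl t, pad dA dB b (tvec t) 1, tag b (ttgt t))"

definition union_trans :: "'a pa \<Rightarrow> 'a pa \<Rightarrow> 'a ptrans set" where
  "union_trans A B = (\<Union>b. lift_trans (pa_dim A) (pa_dim B) b ` pa_trans (component A B b) \<union>
      start_trans (pa_dim A) (pa_dim B) b ` {t \<in> pa_trans (component A B b). tsrc t = pa_init (component A B b)})"

definition union_pa :: "'a pa \<Rightarrow> 'a pa \<Rightarrow> 'a pa" where
  "union_pa A B = \<lparr>pa_dim = pa_dim A + (pa_dim B + 2),
     pa_states = insert 0 (\<Union>b. tag b ` pa_states (component A B b)),
     pa_init = 0, pa_trans = union_trans A B,
     pa_final = (\<Union>b. tag b ` pa_final (component A B b)),
     pa_constr = vprod (pa_constr A) (vprod {zeros (pa_dim B)} {vscale k [1, 0] | k. 1 \<le> k}) \<union>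
                 vprod {zeros (pa_dim A)} (vprod (pa_constr B) {vscale k [0, 1] | k. 1 \<le> k})\<rparr>"

lemma union_pa_sel [simp]:
  "pa_dim (union_pa A B) = pa_dim A + (pa_dim B + 2)"
  "pa_states (union_pa A B) = insert 0 (\<Union>b. tag b ` pa_states (component A B b))"
  "pa_init (union_pa A B) = 0" "pa_trans (union_pa A B) = union_trans A B"
  "pa_constr (union_pa A B) = vprod (pa_constr A) (vprod {zeros (pa_dim B)} {vscale k [1, 0] | k. 1 \<le> k}) \<union>
                 vprod {zeros (pa_dim A)} (vprod (pa_constr B) {vscale k [0, 1] | k. 1 \<le> k})"
  by (simp_all add: union_pa_def)

lemma tag_in_union_final_iff: "tag b q \<in> pa_final (union_pa A B) \<longleftrightarrow> q \<in> pa_final (component A B b)"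
  by (auto simp: union_pa_def)

lemma zero_notin_union_final: "0 \<notin> pa_final (union_pa A B)"
  by (auto simp: union_pa_def)

lemma union_final_tagE:
  assumes "x \<in> pa_final (union_pa A B)"
  obtains b f where "x = tag b f" "f \<in> pa_final (component A B b)"
  using assms by (auto simp: union_pa_def)

lemma tag_in_union_states_iff: "tag b q \<in> pa_states (union_pa A B) \<longleftrightarrow> q \<in> pa_states (component A B b)"
  by auto

lemma wf_component: "wf_pa A \<Longrightarrow> wf_pa B \<Longrightarrow> wf_pa (component A B b)"
  by (simp add: component_def)

lemma lift_trans_sel [simp]:
  "tsrc (lift_trans dA dB b t) = tag b (tsrc t)" "ttgt (lift_trans dA dB b t) = tag b (ttgt t)"
  "tlbl (lift_trans dA dB b t) = tlbl t" "tvec (lift_trans dA dB b t) = pad dA dB b (tvec t) 1"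
  by (simp_all add: lift_trans_def)

lemma start_trans_sel [simp]:
  "tsrc (start_trans dA dB b t) = 0" "ttgt (start_trans dA dB b t) = tag b (ttgt t)"
  "tlbl (start_trans dA dB b t) = tlbl t" "tvec (start_trans dA dB b t) = pad dA dB b (tvec t) 1"
  by (simp_all add: start_trans_def)

lemma union_trans_cases:
  assumes "t \<in> union_trans A B"
  obtains (lift) b t' where "t' \<in> pa_trans (component A B b)" "t = lift_trans (pa_dim A) (pa_dim B) b t'"
  | (start) b t' where "t' \<in> pa_trans (component A B b)" "tsrc t' = pa_init (component A B b)"
       "t = start_trans (pa_dim A) (pa_dim B) b t'"
  using assms unfolding union_trans_def by auto

lemma lift_trans_in_union_trans:
  "t \<in> pa_trans (component A B b) \<Longrightarrow> lift_trans (pa_dim A) (pa_dim B) b t \<in> union_trans A B"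
  unfolding union_trans_def by blast

lemma start_trans_in_union_trans:
  "t \<in> pa_trans (component A B b) \<Longrightarrow> tsrc t = pa_init (component A B b) \<Longrightarrow>
    start_trans (pa_dim A) (pa_dim B) b t \<in> union_trans A B"
  unfolding union_trans_def by blast

lemma union_trans_from_tag:
  assumes "t \<in> union_trans A B" "tsrc t = tag b p"
  obtains t' where "t' \<in> pa_trans (component A B b)" "tsrc t' = p" "t = lift_trans (pa_dim A) (pa_dim B) b t'"
  using assms(1) by (cases rule: union_trans_cases) (use assms(2) that in auto)

lemma union_trans_from_0:
  assumes "t \<in> union_trans A B" "tsrc t = 0"
  obtains b t' where "t' \<in> pa_trans (component A B b)" "tsrc t' = pa_init (component A B b)"
    "t = start_trans (pa_dim A) (pa_dim B) b t'"
  using assms(1) by (cases rule: union_trans_cases) (use assms(2) that in auto)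

lemma union_path_from_tag:
  "path (union_pa A B) (tag b p) rs y \<Longrightarrow>
    \<exists>rs' q. y = tag b q \<and> rs = map (lift_trans (pa_dim A) (pa_dim B) b) rs' \<and> path (component A B b) p rs' q"
proof (induction rs arbitrary: p)
  case (Cons t ts)
  then have t: "t \<in> union_trans A B" "tsrc t = tag b p" and ts: "path (union_pa A B) (ttgt t) ts y"
    by auto
  obtain t' where t': "t' \<in> pa_trans (component A B b)" "tsrc t' = p" "t = lift_trans (pa_dim A) (pa_dim B) b t'"
    using t by (rule union_trans_from_tag)
  have "path (union_pa A B) (tag b (ttgt t')) ts y"
    using ts t'(3) by simp
  then obtain rs' q where "y = tag b q" "ts = map (lift_trans (pa_dim A) (pa_dim B) b) rs'"
    "path (component A B b) (ttgt t') rs' q"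
    using Cons.IH by blast
  then show ?case
    using t' by (intro exI[of _ "t' # rs'"] exI[of _ q]) auto
qed auto

lemma union_path_lift:
  "path (component A B b) p rs q \<Longrightarrow>
    path (union_pa A B) (tag b p) (map (lift_trans (pa_dim A) (pa_dim B) b) rs) (tag b q)"
  by (induction rs arbitrary: p) (auto intro: lift_trans_in_union_trans)

lemma rho_lift_trans:
  assumes "wf_pa (component A B b)" "path (component A B b) p rs q"
  shows "rho (pa_dim A + (pa_dim B + 2)) (map (lift_trans (pa_dim A) (pa_dim B) b) rs)
    = pad (pa_dim A) (pa_dim B) b (rho (pa_dim (component A B b)) rs) (length rs)"
  using assms(2)
proof (induction rs arbitrary: p)
  case Nil
  have "zeros (pa_dim A + (pa_dim B + 2)) = zeros (pa_dim A) @ zeros (pa_dim B) @ [0, 0]"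
    by (simp only: replicate_add) (simp add: numeral_2_eq_2)
  then show ?case
    by (simp add: pad_def component_def)
next
  case (Cons t ts)
  have "length (tvec t) = pa_dim (component A B b)"
    using Cons.prems wf_pa_trans[OF assms(1)] by simp
  moreover have "length (rho (pa_dim (component A B b)) ts) = pa_dim (component A B b)"
    using length_rho_path[OF assms(1)] Cons.prems by auto
  ultimately show ?case
    using Cons by (auto simp: pad_def vadd_blocks component_def)
qed

lemma pad_in_union_constr_iff:
  assumes "wf_pa A" "wf_pa B" "length v = pa_dim (component A B b)" "1 \<le> n"
  shows "pad (pa_dim A) (pa_dim B) b v n \<in> pa_constr (union_pa A B) \<longleftrightarrow> v \<in> pa_constr (component A B b)"
proof -
  have lA: "\<forall>x\<in>pa_constr A. length x = pa_dim A" and lB: "\<forall>x\<in>pa_constr B. length x = pa_dim B"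
    using assms(1,2) semilinear_length unfolding wf_pa_def by blast+
  have l0: "\<forall>x\<in>{zeros d}. length x = d" for d
    by simp
  have counters: "[n, 0] \<in> {vscale k [1, 0] | k. 1 \<le> k}" "[n, 0] \<notin> {vscale k [0, 1] | k. 1 \<le> k}"
    "[0, n] \<in> {vscale k [0, 1] | k. 1 \<le> k}" "[0, n] \<notin> {vscale k [1, 0] | k. 1 \<le> k}"
    using assms(4) by (auto simp: vscale_def)
  show ?thesis
  proof (cases b)
    case False
    then have v: "length v = pa_dim A"
      using assms(3) by (simp add: component_def)
    show ?thesis
      using False append_in_vprod_iff[OF lA v] append_in_vprod_iff[OF l0 v]
        append_in_vprod_iff[OF l0, of "zeros (pa_dim B)"] append_in_vprod_iff[OF lB, of "zeros (pa_dim B)"] counters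
      by (auto simp: pad_def component_def)
  next
    case True
    then have v: "length v = pa_dim B"
      using assms(3) by (simp add: component_def)
    show ?thesis
      using True append_in_vprod_iff[OF lA, of "zeros (pa_dim A)"] append_in_vprod_iff[OF l0, of "zeros (pa_dim A)"]
        append_in_vprod_iff[OF lB v] append_in_vprod_iff[OF l0 v] counters
      by (auto simp: pad_def component_def)
  qed
qed

lemma seg_conditions_lift:
  assumes "wf_pa A" "wf_pa B" "path (component A B b) p rs' q"
    and vec: "map tvec rs = map (\<lambda>t. pad (pa_dim A) (pa_dim B) b (tvec t) 1) rs'"
    and tgt: "map ttgt rs = map (tag b \<circ> ttgt) rs'"
  shows "(rs \<noteq> [] \<and> (\<forall>t\<in>set (butlast rs). ttgt t \<notin> pa_final (union_pa A B)) \<and>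
            rho (pa_dim (union_pa A B)) rs \<in> pa_constr (union_pa A B)) \<longleftrightarrow>
         (rs' \<noteq> [] \<and> (\<forall>t\<in>set (butlast rs'). ttgt t \<notin> pa_final (component A B b)) \<and>
            rho (pa_dim (component A B b)) rs' \<in> pa_constr (component A B b))"
proof -
  have len: "length rs = length rs'"
    using vec by (metis length_map)
  have "(\<forall>t\<in>set (butlast rs). ttgt t \<notin> pa_final (union_pa A B)) \<longleftrightarrow>
      (\<forall>y\<in>set (butlast (map ttgt rs)). y \<notin> pa_final (union_pa A B))"
    by (simp add: map_butlast[symmetric])
  also have "\<dots> \<longleftrightarrow> (\<forall>t\<in>set (butlast rs'). ttgt t \<notin> pa_final (component A B b))"
    unfolding tgt by (simp add: map_butlast[symmetric] tag_in_union_final_iff)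
  finally have inner: "(\<forall>t\<in>set (butlast rs). ttgt t \<notin> pa_final (union_pa A B)) \<longleftrightarrow>
      (\<forall>t\<in>set (butlast rs'). ttgt t \<notin> pa_final (component A B b))" .
  have "rho (pa_dim (union_pa A B)) rs = pad (pa_dim A) (pa_dim B) b (rho (pa_dim (component A B b)) rs') (length rs')"
    using rho_cong[of rs "map (lift_trans (pa_dim A) (pa_dim B) b) rs'"] vec
      rho_lift_trans[OF wf_component[OF assms(1,2)] assms(3)] by simp
  then have "rs' \<noteq> [] \<Longrightarrow> rho (pa_dim (union_pa A B)) rs \<in> pa_constr (union_pa A B) \<longleftrightarrow>
      rho (pa_dim (component A B b)) rs' \<in> pa_constr (component A B b)"
    using pad_in_union_constr_iff[OF assms(1,2) length_rho_path[OF wf_component[OF assms(1,2)] assms(3)]]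
    by (simp add: Suc_leI)
  moreover have "rs \<noteq> [] \<longleftrightarrow> rs' \<noteq> []"
    using len by auto
  ultimately show ?thesis
    using inner by blast
qed

lemma seg_lang_union_tag:
  assumes "wf_pa A" "wf_pa B"
  shows "seg_lang (union_pa A B) (tag b p) (tag b q) = seg_lang (component A B b) p q"
proof (intro set_eqI iffI)
  fix w assume "w \<in> seg_lang (union_pa A B) (tag b p) (tag b q)"
  then obtain rs where rs: "w = map tlbl rs" "path (union_pa A B) (tag b p) rs (tag b q)"
    "rs \<noteq> [] \<and> (\<forall>t\<in>set (butlast rs). ttgt t \<notin> pa_final (union_pa A B)) \<and>
      rho (pa_dim (union_pa A B)) rs \<in> pa_constr (union_pa A B)"
    unfolding seg_lang_def by blast
  obtain rs' where rs': "rs = map (lift_trans (pa_dim A) (pa_dim B) b) rs'" "path (component A B b) p rs' q"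
    using union_path_from_tag[OF rs(2)] by auto
  then show "w \<in> seg_lang (component A B b) p q"
    unfolding seg_lang_def using rs seg_conditions_lift[OF assms rs'(2), of rs]
    by (intro CollectI exI[of _ rs']) simp
next
  fix w assume "w \<in> seg_lang (component A B b) p q"
  then obtain rs' where rs': "w = map tlbl rs'" "path (component A B b) p rs' q"
    "rs' \<noteq> [] \<and> (\<forall>t\<in>set (butlast rs'). ttgt t \<notin> pa_final (component A B b)) \<and>
      rho (pa_dim (component A B b)) rs' \<in> pa_constr (component A B b)"
    unfolding seg_lang_def by blast
  then show "w \<in> seg_lang (union_pa A B) (tag b p) (tag b q)"
    unfolding seg_lang_def using union_path_lift[OF rs'(2)]
      seg_conditions_lift[OF assms rs'(2), of "map (lift_trans (pa_dim A) (pa_dim B) b) rs'"]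
    by (intro CollectI exI[of _ "map (lift_trans (pa_dim A) (pa_dim B) b) rs'"]) simp
qed

lemma seg_lang_union_0:
  assumes "wf_pa A" "wf_pa B"
  shows "seg_lang (union_pa A B) 0 (tag b q) = seg_lang (component A B b) (pa_init (component A B b)) q"
proof (intro set_eqI iffI)
  fix w assume "w \<in> seg_lang (union_pa A B) 0 (tag b q)"
  then obtain t ts where rs: "w = map tlbl (t # ts)" "path (union_pa A B) 0 (t # ts) (tag b q)"
    "(\<forall>t\<in>set (butlast (t # ts)). ttgt t \<notin> pa_final (union_pa A B)) \<and>
      rho (pa_dim (union_pa A B)) (t # ts) \<in> pa_constr (union_pa A B)"
    unfolding seg_lang_def by (auto simp: neq_Nil_conv)
  then have "t \<in> union_trans A B" "tsrc t = 0"
    by auto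
  then obtain c t' where t': "t' \<in> pa_trans (component A B c)" "tsrc t' = pa_init (component A B c)"
    "t = start_trans (pa_dim A) (pa_dim B) c t'"
    by (rule union_trans_from_0)
  then have "path (union_pa A B) (tag c (ttgt t')) ts (tag b q)"
    using rs(2) by simp
  then obtain rs'' where rs'': "ts = map (lift_trans (pa_dim A) (pa_dim B) c) rs''" "c = b"
    "path (component A B b) (ttgt t') rs'' q"
    using union_path_from_tag by fastforce
  then have path: "path (component A B b) (pa_init (component A B b)) (t' # rs'') q"
    using t' by simp
  show "w \<in> seg_lang (component A B b) (pa_init (component A B b)) q"
    unfolding seg_lang_def using rs t' rs'' seg_conditions_lift[OF assms path, of "t # ts"]
    by (intro CollectI exI[of _ "t' # rs''"]) (simp add: path)
next
  fix w assume "w \<in> seg_lang (component A B b) (pa_init (component A B b)) q"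
  then obtain t' rs'' where rs': "w = map tlbl (t' # rs'')"
    "path (component A B b) (pa_init (component A B b)) (t' # rs'') q"
    "(\<forall>t\<in>set (butlast (t' # rs'')). ttgt t \<notin> pa_final (component A B b)) \<and>
      rho (pa_dim (component A B b)) (t' # rs'') \<in> pa_constr (component A B b)"
    unfolding seg_lang_def by (auto simp: neq_Nil_conv)
  define rs where "rs = start_trans (pa_dim A) (pa_dim B) b t' # map (lift_trans (pa_dim A) (pa_dim B) b) rs''"
  have "path (union_pa A B) 0 rs (tag b q)"
    unfolding rs_def using rs'(2) start_trans_in_union_trans union_path_lift by fastforce
  then show "w \<in> seg_lang (union_pa A B) 0 (tag b q)"
    unfolding seg_lang_def using rs' seg_conditions_lift[OF assms rs'(2), of rs]
    by (intro CollectI exI[of _ rs]) (simp add: rs_def)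
qed

lemma length_pad: "length v = pa_dim (component A B b) \<Longrightarrow> length (pad (pa_dim A) (pa_dim B) b v n) = pa_dim A + (pa_dim B + 2)"
  by (cases b) (auto simp: pad_def component_def)

lemma union_trans_wf:
  assumes "wf_pa A" "wf_pa B" "t \<in> union_trans A B"
  shows "tsrc t \<in> pa_states (union_pa A B) \<and> ttgt t \<in> pa_states (union_pa A B) \<and>
    length (tvec t) = pa_dim (union_pa A B)"
  using assms(3)
proof (cases rule: union_trans_cases)
  case (lift b t')
  then show ?thesis
    using wf_pa_trans[OF wf_component[OF assms(1,2)] lift(1)] length_pad by auto
next
  case (start b t')
  then show ?thesis
    using wf_pa_trans[OF wf_component[OF assms(1,2)] start(1)] length_pad by auto
qed

lemma semilinear_union_constr:
  assumes "wf_pa A" "wf_pa B"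
  shows "semilinear (pa_dim (union_pa A B)) (pa_constr (union_pa A B))"
proof -
  have sA: "semilinear (pa_dim A) (pa_constr A)" and sB: "semilinear (pa_dim B) (pa_constr B)"
    using assms unfolding wf_pa_def by blast+
  have "semilinear (pa_dim A + (pa_dim B + 2))
      (vprod (pa_constr A) (vprod {zeros (pa_dim B)} {vscale k [1, 0] | k. 1 \<le> k}))"
    using semilinear_vprod[OF sA semilinear_vprod[OF semilinear_singleton[of "zeros (pa_dim B)"]
        semilinear_positive_multiples[of "[1, 0]"]]]
    by simp
  moreover have "semilinear (pa_dim A + (pa_dim B + 2))
      (vprod {zeros (pa_dim A)} (vprod (pa_constr B) {vscale k [0, 1] | k. 1 \<le> k}))"
    using semilinear_vprod[OF semilinear_singleton[of "zeros (pa_dim A)"]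
        semilinear_vprod[OF sB semilinear_positive_multiples[of "[0, 1]"]]]
    by simp
  ultimately show ?thesis
    by (simp add: semilinear_Un)
qed

lemma wf_union_pa:
  assumes "wf_pa A" "wf_pa B"
  shows "wf_pa (union_pa A B)"
proof -
  have wf: "wf_pa (component A B b)" for b
    using wf_component[OF assms] .
  have "\<forall>(p, a, v, q) \<in> pa_trans (union_pa A B). p \<in> pa_states (union_pa A B) \<and>
      q \<in> pa_states (union_pa A B) \<and> length v = pa_dim (union_pa A B)"
    using union_trans_wf[OF assms] by fastforce
  moreover have "finite (union_trans A B)" "finite (pa_states (union_pa A B))"
    using wf unfolding union_trans_def wf_pa_def by auto
  moreover have "pa_final (union_pa A B) \<subseteq> pa_states (union_pa A B)"
  proof
    fix x assume "x \<in> pa_final (union_pa A B)"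
    then obtain b f where "x = tag b f" "f \<in> pa_final (component A B b)"
      by (rule union_final_tagE)
    then show "x \<in> pa_states (union_pa A B)"
      using wf[of b] unfolding wf_pa_def by auto
  qed
  ultimately show ?thesis
    using semilinear_union_constr[OF assms] unfolding wf_pa_def by simp
qed

lemma union_pa_final: "pa_final (union_pa A B) = (\<Union>b. tag b ` pa_final (component A B b))"
  by (simp add: union_pa_def)

lemma union_edge_from_tag:
  assumes "(tag b p, y) \<in> pa_edges (union_pa A B)"
  obtains q where "y = tag b q" "(p, q) \<in> pa_edges (component A B b)"
proof -
  obtain t where t: "t \<in> union_trans A B" "tsrc t = tag b p" "ttgt t = y"
    using assms by (auto elim: edgesE)
  obtain t' where "t' \<in> pa_trans (component A B b)" "tsrc t' = p" "t = lift_trans (pa_dim A) (pa_dim B) b t'"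
    using t(1,2) by (rule union_trans_from_tag)
  then show thesis
    using that[of "ttgt t'"] trans_in_edges[of t' "component A B b"] t(3) by simp
qed

lemma union_edge_lift:
  assumes "(p, q) \<in> pa_edges (component A B b)"
  shows "(tag b p, tag b q) \<in> pa_edges (union_pa A B)"
proof -
  obtain t where "t \<in> pa_trans (component A B b)" "tsrc t = p" "ttgt t = q"
    using assms by (rule edgesE)
  moreover from this(1) have "lift_trans (pa_dim A) (pa_dim B) b t \<in> pa_trans (union_pa A B)"
    using lift_trans_in_union_trans by simp
  ultimately show ?thesis
    using trans_in_edges by fastforce
qed

lemma union_no_edge_to_0: "(x, 0) \<notin> pa_edges (union_pa A B)"
proof
  assume "(x, 0) \<in> pa_edges (union_pa A B)"
  then obtain t where "t \<in> union_trans A B" "ttgt t = 0"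
    by (auto elim: edgesE)
  then show False
    by (cases rule: union_trans_cases) auto
qed

lemma union_rtrancl_from_tag:
  "(tag b p, y) \<in> (pa_edges (union_pa A B))\<^sup>* \<Longrightarrow> \<exists>q. y = tag b q \<and> (p, q) \<in> (pa_edges (component A B b))\<^sup>*"
proof (induction rule: rtrancl_induct)
  case (step y z)
  then obtain q where q: "y = tag b q" "(p, q) \<in> (pa_edges (component A B b))\<^sup>*"
    by blast
  then obtain q' where "z = tag b q'" "(q, q') \<in> pa_edges (component A B b)"
    using step(2) by (auto elim: union_edge_from_tag)
  then show ?case
    using q(2) by (blast intro: rtrancl_into_rtrancl)
qed blast

lemma union_rtrancl_lift:
  "(p, q) \<in> (pa_edges (component A B b))\<^sup>* \<Longrightarrow> (tag b p, tag b q) \<in> (pa_edges (union_pa A B))\<^sup>*"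
  by (induction rule: rtrancl_induct) (auto intro: rtrancl_into_rtrancl union_edge_lift)

lemma scc_of_union_tag: "scc_of (union_pa A B) (tag b q) = tag b ` scc_of (component A B b) q"
proof (intro set_eqI iffI)
  fix x assume "x \<in> scc_of (union_pa A B) (tag b q)"
  then have x: "x \<in> pa_states (union_pa A B)" "(tag b q, x) \<in> (pa_edges (union_pa A B))\<^sup>*"
    "(x, tag b q) \<in> (pa_edges (union_pa A B))\<^sup>*"
    unfolding scc_of_def by auto
  obtain p where p: "x = tag b p" "(q, p) \<in> (pa_edges (component A B b))\<^sup>*"
    using union_rtrancl_from_tag[OF x(2)] by blast
  moreover have "(p, q) \<in> (pa_edges (component A B b))\<^sup>*"
    using union_rtrancl_from_tag[of b p "tag b q"] x(3) p(1) by auto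
  moreover have "p \<in> pa_states (component A B b)"
    using x(1) p(1) tag_in_union_states_iff by metis
  ultimately show "x \<in> tag b ` scc_of (component A B b) q"
    unfolding scc_of_def by blast
next
  fix x assume "x \<in> tag b ` scc_of (component A B b) q"
  then show "x \<in> scc_of (union_pa A B) (tag b q)"
    unfolding scc_of_def using union_rtrancl_lift by fastforce
qed

lemma scc_of_union_0: "scc_of (union_pa A B) 0 = {0}"
proof -
  have "(x, 0) \<in> (pa_edges (union_pa A B))\<^sup>* \<Longrightarrow> x = 0" for x
    by (erule rtranclE) (use union_no_edge_to_0 in auto)
  then show ?thesis
    unfolding scc_of_def by auto
qed

lemma is_leaf_scc_union_tag_iff:
  assumes "q \<in> pa_states (component A B b)"
  shows "is_leaf_scc (union_pa A B) (scc_of (union_pa A B) (tag b q)) \<longleftrightarrow>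
    is_leaf_scc (component A B b) (scc_of (component A B b) q)"
proof -
  have "(\<exists>u\<in>tag b ` S. \<exists>v. (u, v) \<in> pa_edges (union_pa A B) \<and> v \<notin> tag b ` S) \<longleftrightarrow>
      (\<exists>u\<in>S. \<exists>v. (u, v) \<in> pa_edges (component A B b) \<and> v \<notin> S)" for S
  proof
    assume "\<exists>u\<in>tag b ` S. \<exists>v. (u, v) \<in> pa_edges (union_pa A B) \<and> v \<notin> tag b ` S"
    then obtain u v where "u \<in> S" "(tag b u, v) \<in> pa_edges (union_pa A B)" "v \<notin> tag b ` S"
      by blast
    moreover from this(2) obtain v' where "v = tag b v'" "(u, v') \<in> pa_edges (component A B b)"
      by (rule union_edge_from_tag)
    ultimately show "\<exists>u\<in>S. \<exists>v. (u, v) \<in> pa_edges (component A B b) \<and> v \<notin> S"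
      by blast
  next
    assume "\<exists>u\<in>S. \<exists>v. (u, v) \<in> pa_edges (component A B b) \<and> v \<notin> S"
    then show "\<exists>u\<in>tag b ` S. \<exists>v. (u, v) \<in> pa_edges (union_pa A B) \<and> v \<notin> tag b ` S"
      using union_edge_lift by fastforce
  qed
  moreover have "scc_of (union_pa A B) (tag b q) \<in> sccs (union_pa A B)"
    "scc_of (component A B b) q \<in> sccs (component A B b)"
    using assms unfolding sccs_def by auto
  ultimately show ?thesis
    unfolding is_leaf_scc_def scc_of_union_tag by blast
qed

lemma union_final_in_leaf:
  assumes "final_only_in_leaves (component A B b)" "f \<in> pa_final (component A B b)"
  shows "is_leaf_scc (union_pa A B) (scc_of (union_pa A B) (tag b f)) \<and> tag b f \<in> scc_of (union_pa A B) (tag b f)"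
proof -
  obtain S where "is_leaf_scc (component A B b) S" "f \<in> S"
    using assms unfolding final_only_in_leaves_def by blast
  then have "is_leaf_scc (component A B b) (scc_of (component A B b) f)" "f \<in> pa_states (component A B b)"
    using leaf_scc_eq_scc_of by metis+
  then show ?thesis
    using is_leaf_scc_union_tag_iff unfolding scc_of_def by auto
qed

lemma card_union_leaf_final:
  assumes "wf_pa A" "wf_pa B" "\<And>b. final_only_in_leaves (component A B b)" "is_leaf_scc (union_pa A B) S"
  shows "card (S \<inter> pa_final (union_pa A B)) \<le> 1"
proof -
  obtain x where x: "x \<in> pa_states (union_pa A B)" "S = scc_of (union_pa A B) x"
    using assms(4) unfolding is_leaf_scc_def sccs_def by blast
  show ?thesis
  proof (cases "x = 0")
    case True
    then show ?thesis
      using x(2) by (simp add: scc_of_union_0 zero_notin_union_final)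
  next
    case False
    then obtain b q where q: "x = tag b q" "q \<in> pa_states (component A B b)"
      using x(1) by auto
    let ?Sb = "scc_of (component A B b) q"
    have "is_leaf_scc (component A B b) ?Sb"
      using assms(4) x(2) q is_leaf_scc_union_tag_iff[OF q(2)] by simp
    then have "card (?Sb \<inter> pa_final (component A B b)) \<le> 1" "finite (?Sb \<inter> pa_final (component A B b))"
      using assms(3) finite_leaf_scc[OF wf_component[OF assms(1,2)]] unfolding final_only_in_leaves_def by blast+
    moreover have "S \<inter> pa_final (union_pa A B) = tag b ` (?Sb \<inter> pa_final (component A B b))"
      using x(2) q(1) by (auto simp: scc_of_union_tag tag_in_union_final_iff)
    ultimately show ?thesis
      using card_image_le le_trans by metis
  qed
qed

lemma final_only_in_leaves_union_pa:
  assumes "wf_pa A" "wf_pa B" "final_only_in_leaves A" "final_only_in_leaves B"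
  shows "final_only_in_leaves (union_pa A B)"
proof -
  have leaves: "final_only_in_leaves (component A B b)" for b
    using assms(3,4) by (simp add: component_def)
  have "\<exists>S. is_leaf_scc (union_pa A B) S \<and> x \<in> S" if "x \<in> pa_final (union_pa A B)" for x
    using that union_final_in_leaf[OF leaves] by (elim union_final_tagE) blast
  then show ?thesis
    using card_union_leaf_final[OF assms(1,2) leaves] unfolding final_only_in_leaves_def by blast
qed

lemma spba_lang_union_pa:
  assumes "wf_pa A" "wf_pa B" "final_only_in_leaves A" "final_only_in_leaves B"
  shows "spba_lang (union_pa A B) = spba_lang A \<union> spba_lang B"
proof -
  let ?L = "\<lambda>C. \<Union>f\<in>pa_final C. conc_omega (seg_lang C (pa_init C) f) (omega_pow (seg_lang C f f))"
  have "spba_lang (union_pa A B) = (\<Union>b. ?L (component A B b))"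
    unfolding spba_lang_leaf_decomposition[OF wf_union_pa[OF assms(1,2)] final_only_in_leaves_union_pa[OF assms]]
    by (simp add: union_pa_final seg_lang_union_0[OF assms(1,2)] seg_lang_union_tag[OF assms(1,2)])
  also have "\<dots> = ?L A \<union> ?L B"
    by (simp add: UNIV_bool component_def Un_commute)
  also have "\<dots> = spba_lang A \<union> spba_lang B"
    using spba_lang_leaf_decomposition[OF assms(1,3)] spba_lang_leaf_decomposition[OF assms(2,4)] by simp
  finally show ?thesis .
qed

section \<open>Automata for finite unions of \<open>U V\<^sup>\<omega>\<close>\<close>

definition empty_pa :: "'a pa" where
  "empty_pa = \<lparr>pa_dim = 0, pa_states = {0}, pa_init = 0, pa_trans = {}, pa_final = {}, pa_constr = {}\<rparr>"

lemma wf_empty_pa: "wf_pa empty_pa"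
  unfolding wf_pa_def empty_pa_def using semilinear_empty by auto

lemma spba_lang_empty_pa: "spba_lang empty_pa = {}"
  unfolding spba_lang_def is_orun_def empty_pa_def by auto

lemma final_only_in_leaves_empty_pa: "final_only_in_leaves empty_pa"
  unfolding final_only_in_leaves_def empty_pa_def by simp

lemma leaf_spba_of_Union_conc_omega:
  assumes "\<forall>(U, V) \<in> set UVs. parikh_recognizable U \<and> parikh_recognizable V"
  obtains A :: "'a pa"
  where "wf_pa A" "final_only_in_leaves A"
    and "spba_lang A = (\<Union>(U, V) \<in> set UVs. conc_omega U (omega_pow V))"
  using assms
proof (induction UVs arbitrary: thesis)
  case Nil
  then show ?case
    using wf_empty_pa final_only_in_leaves_empty_pa spba_lang_empty_pa by auto
next
  case (Cons UV UVs)
  obtain U V where UV: "UV = (U, V)"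
    by (cases UV)
  obtain P R :: "'a pa" where PR: "wf_pa P" "pa_lang P = U" "wf_pa R" "pa_lang R = V"
    using Cons.prems(2) UV unfolding parikh_recognizable_def by auto
  obtain A :: "'a pa" where A: "wf_pa A" "final_only_in_leaves A"
    "spba_lang A = (\<Union>(U, V) \<in> set UVs. conc_omega U (omega_pow V))"
    using Cons.IH Cons.prems(2) by auto
  let ?C = "union_pa (omega_pa P R) A"
  have "wf_pa ?C" "final_only_in_leaves ?C"
    using wf_union_pa final_only_in_leaves_union_pa wf_omega_pa[OF PR(1,3)]
      final_only_in_leaves_omega_pa[OF PR(3)] A(1,2)
    by blast+
  moreover have "spba_lang ?C = (\<Union>(U, V) \<in> set (UV # UVs). conc_omega U (omega_pow V))"
    using spba_lang_union_pa[OF wf_omega_pa[OF PR(1,3)] A(1) final_only_in_leaves_omega_pa[OF PR(3)] A(2)]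
      spba_lang_omega_pa[OF PR(1,3)] A(3) PR(2,4) UV
    by simp
  ultimately show ?case
    using Cons.prems(1) by blast
qed

theorem theorem3:
  fixes L :: "('a :: finite) word set"
  shows "(\<exists>UVs :: ('a list set \<times> 'a list set) list.
            (\<forall>(U, V) \<in> set UVs. parikh_recognizable U \<and> parikh_recognizable V) \<and>
            L = (\<Union>(U, V) \<in> set UVs. conc_omega U (omega_pow V)))
     \<longleftrightarrow>
         (\<exists>A :: 'a pa. wf_pa A \<and> spba_lang A = L \<and> final_only_in_leaves A)"
proof
  assume "\<exists>UVs :: ('a list set \<times> 'a list set) list.
            (\<forall>(U, V) \<in> set UVs. parikh_recognizable U \<and> parikh_recognizable V) \<and>
            L = (\<Union>(U, V) \<in> set UVs. conc_omega U (omega_pow V))"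
  then show "\<exists>A :: 'a pa. wf_pa A \<and> spba_lang A = L \<and> final_only_in_leaves A"
    by (metis leaf_spba_of_Union_conc_omega)
next
  assume "\<exists>A :: 'a pa. wf_pa A \<and> spba_lang A = L \<and> final_only_in_leaves A"
  then show "\<exists>UVs :: ('a list set \<times> 'a list set) list.
            (\<forall>(U, V) \<in> set UVs. parikh_recognizable U \<and> parikh_recognizable V) \<and>
            L = (\<Union>(U, V) \<in> set UVs. conc_omega U (omega_pow V))"
    by (metis Union_conc_omega_of_leaf_spba)
qed

end
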